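(* Assume that (H1)-(H2) hold. If $H^1(p,w)$ is dense in $L^2(p)$ and the injection of $H^1(p,w)$ in $L^2(p)$ is compact, then $\widetilde{\mathcal{L}}$ is compact.
   Context: Let $-\infty\le a<b\le\infty$, $p$ a probability density on $]a,b[$ with $p>0$ a.e., $w\in L^1_{\text{loc}}(]a,b[)$ a weight with $w>0$ a.e. and $pw\in L^1_{\text{loc}}$. Let $P(x)=\int_a^x p$, $\bar P=1-P$, $K(x,y)=P(x\wedge y)\bar P(x\vee y)$. $H^1(p,w)$ is the set of weakly differentiable $h\in L^2(p)$ with $h'\in L^2(pw)$, normed by $\|h\|^2_{L^2(p)}+\|h'\|^2_{L^2(pw)}$. $C(p,w)$ is the smallest $C$ with $\mathrm{Var}_p[h]\le C\,\mathbb{E}_p[|h'|^2w]$ for all $h\in H^1(p,w)$. Hypotheses: (H1) $C(p,w)<\infty$; (H2) $L^2(pw)\subset L^1_{\text{loc}}(]a,b[)$. $\widetilde{\mathcal{L}} f(x)=\frac{1}{p(x)w(x)}\int_a^b K(x,y)f(y)\,dy$, acting on $E^2(p,w)=L^2(pw)$. *)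

theory Defs
  imports "HOL-Analysis.Analysis"
begin

definition ival :: "ereal \<Rightarrow> ereal \<Rightarrow> real set" where
  "ival a b = {x. a < ereal x \<and> ereal x < b}"

definition loc_integrable :: "real set \<Rightarrow> (real \<Rightarrow> real) \<Rightarrow> bool" where
  "loc_integrable U f \<longleftrightarrow> (\<forall>K. compact K \<and> K \<subseteq> U \<longrightarrow> set_integrable lborel K f)"

definition test_fun :: "real set \<Rightarrow> (real \<Rightarrow> real) \<Rightarrow> bool" where
  "test_fun U \<phi> \<longleftrightarrow> (\<forall>k x. (deriv ^^ k) \<phi> differentiable (at x))
     \<and> compact (closure {x. \<phi> x \<noteq> 0}) \<and> closure {x. \<phi> x \<noteq> 0} \<subseteq> U"

definition weak_deriv :: "real set \<Rightarrow> (real \<Rightarrow> real) \<Rightarrow> (real \<Rightarrow> real) \<Rightarrow> bool" where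
  "weak_deriv U h g \<longleftrightarrow> loc_integrable U h \<and> loc_integrable U g \<and>
     (\<forall>\<phi>. test_fun U \<phi> \<longrightarrow>
        (LINT x:U|lborel. h x * deriv \<phi> x) = - (LINT x:U|lborel. g x * \<phi> x))"

text \<open>Weighted L^2 space L^2(q) on U (as a set of representatives).\<close>
definition L2w :: "real set \<Rightarrow> (real \<Rightarrow> real) \<Rightarrow> (real \<Rightarrow> real) set" where
  "L2w U q = {f. f \<in> borel_measurable lborel \<and> set_integrable lborel U (\<lambda>x. q x * (f x)\<^sup>2)}"

definition nrm2 :: "real set \<Rightarrow> (real \<Rightarrow> real) \<Rightarrow> (real \<Rightarrow> real) \<Rightarrow> real" where
  "nrm2 U q f = (LINT x:U|lborel. q x * (f x)\<^sup>2)"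

definition H1 :: "real set \<Rightarrow> (real \<Rightarrow> real) \<Rightarrow> (real \<Rightarrow> real) \<Rightarrow> (real \<Rightarrow> real) \<Rightarrow> (real \<Rightarrow> real) \<Rightarrow> bool" where
  "H1 U p w h g \<longleftrightarrow> h \<in> L2w U p \<and> weak_deriv U h g \<and> g \<in> L2w U (\<lambda>x. p x * w x)"

definition var_p :: "real set \<Rightarrow> (real \<Rightarrow> real) \<Rightarrow> (real \<Rightarrow> real) \<Rightarrow> real" where
  "var_p U p h = (LINT x:U|lborel. p x * (h x)\<^sup>2) - (LINT x:U|lborel. p x * h x)\<^sup>2"

text \<open>The Poincare constant C(p,w) (the smallest admissible constant, infinity if none).\<close>
definition poincare_const :: "real set \<Rightarrow> (real \<Rightarrow> real) \<Rightarrow> (real \<Rightarrow> real) \<Rightarrow> ereal" where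
  "poincare_const U p w = Inf {ereal C | C. C \<ge> 0 \<and>
     (\<forall>h g. H1 U p w h g \<longrightarrow> var_p U p h \<le> C * nrm2 U (\<lambda>x. p x * w x) g)}"

definition cdf :: "real set \<Rightarrow> (real \<Rightarrow> real) \<Rightarrow> real \<Rightarrow> real" where
  "cdf U p x = (LINT y:{y\<in>U. y \<le> x}|lborel. p y)"

definition kern :: "real set \<Rightarrow> (real \<Rightarrow> real) \<Rightarrow> real \<Rightarrow> real \<Rightarrow> real" where
  "kern U p x y = cdf U p (min x y) * (1 - cdf U p (max x y))"

definition Ltilde :: "real set \<Rightarrow> (real \<Rightarrow> real) \<Rightarrow> (real \<Rightarrow> real) \<Rightarrow> (real \<Rightarrow> real) \<Rightarrow> real \<Rightarrow> real" where
  "Ltilde U p w f x = (LINT y:U|lborel. kern U p x y * f y) / (p x * w x)"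

end

theory Submission
  imports Defs
begin

text \<open>
  Fix a base point \<open>c\<close> and write \<open>\<Phi> f (x) = \<integral>\<^sub>c\<^sup>x f\<close>, \<open>H \<psi> (x) = \<integral>\<^sub>a\<^sup>x p \<psi>\<close> and
  \<open>T \<psi> = H \<psi> / (p w)\<close>. The weak derivative of \<open>\<Phi> f\<close> is \<open>f\<close>, and by Fubini
  \<open>\<integral> f (H \<psi>) = - \<integral> p \<psi> (\<Phi> f)\<close> whenever \<open>\<psi>\<close> has \<open>p\<close>-mean zero. Applying the Poincare
  inequality to \<open>\<Phi> f\<close> and Cauchy-Schwarz to the right-hand side shows that \<open>T\<close> maps
  the \<open>p\<close>-centred part of \<open>L\<^sup>2(p)\<close> boundedly into \<open>L\<^sup>2(p w)\<close> (first on truncations, then by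
  monotone convergence), and similarly that \<open>\<Phi>\<close> maps \<open>L\<^sup>2(p w)\<close> boundedly into
  \<open>H\<^sup>1(p, w)\<close>. Since \<open>K(x, \<cdot>) = H (1\<^bsub>\<le>x\<^esub> - P(x))\<close>, Fubini once more gives
  \<open>L\<^sub>~ f = - T (\<Phi> f - E\<^sub>p \<Phi> f)\<close>. Thus \<open>L\<^sub>~\<close> factors through the compact embedding
  \<open>H\<^sup>1(p, w) \<hookrightarrow> L\<^sup>2(p)\<close> between two bounded maps, and is compact.
\<close>

lemma open_ival: "open (ival a b)"
proof -
  have "ival a b = ereal -` {a<..<b}"
    unfolding ival_def by auto
  then show ?thesis
    using continuous_on_ereal[OF continuous_on_id] open_vimage by (metis open_greaterThanLessThan)
qed

lemma ival_convex: "x \<in> ival a b \<Longrightarrow> y \<in> ival a b \<Longrightarrow> x \<le> z \<Longrightarrow> z \<le> y \<Longrightarrow> z \<in> ival a b"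
  unfolding ival_def
  using less_le_trans[of a "ereal x" "ereal z"] le_less_trans[of "ereal z" "ereal y" b] by auto

lemma set_integral_nonneg_AE:
  fixes f :: "'a \<Rightarrow> real"
  assumes "AE x in M. x \<in> A \<longrightarrow> 0 \<le> f x"
  shows "0 \<le> (LINT x:A|M. f x)"
  unfolding set_lebesgue_integral_def
proof (rule integral_nonneg_AE)
  show "AE x in M. 0 \<le> indicator A x *\<^sub>R f x"
    using assms by eventually_elim (simp add: indicator_def)
qed

lemma set_integral_mono_subset:
  fixes f :: "'a \<Rightarrow> real"
  assumes "set_integrable M A f" "B \<in> sets M" "B \<subseteq> A" "\<And>x. x \<in> A \<Longrightarrow> 0 \<le> f x"
  shows "(LINT x:B|M. f x) \<le> (LINT x:A|M. f x)"
  using set_integrable_subset[OF assms(1-3)] assms(1) assms(3,4)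
  unfolding set_lebesgue_integral_def set_integrable_def
  by (intro integral_mono) (auto simp: indicator_def)

lemma abs_integral_le_integral:
  fixes f g :: "'a \<Rightarrow> real"
  assumes "integrable M g" "\<And>x. \<bar>f x\<bar> \<le> g x"
  shows "\<bar>integral\<^sup>L M f\<bar> \<le> integral\<^sup>L M g"
proof -
  have "\<bar>integral\<^sup>L M f\<bar> \<le> (\<integral>x. \<bar>f x\<bar> \<partial>M)"
    by (rule integral_abs_bound)
  also have "\<dots> \<le> integral\<^sup>L M g"
    using assms by (intro integral_mono') (auto intro: order_trans[OF abs_ge_zero])
  finally show ?thesis .
qed

lemma set_integrable_bounded_lborel:
  fixes g :: "real \<Rightarrow> real"
  assumes [measurable]: "K \<in> sets borel" "g \<in> borel_measurable borel"
    and "bounded K" and "\<And>x. x \<in> K \<Longrightarrow> \<bar>g x\<bar> \<le> B"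
  shows "set_integrable lborel K g"
proof -
  have "emeasure lborel K < \<infinity>"
    using emeasure_bounded_finite[OF \<open>bounded K\<close>] .
  then have "set_integrable lborel K (\<lambda>x. B)"
    unfolding set_integrable_def by simp
  then show ?thesis
    by (rule set_integrable_bound)
      (use assms(4) in \<open>auto simp: set_borel_measurable_def intro!: AE_I2 intro: order_trans[OF _ abs_ge_self]\<close>)
qed

lemma integrable_pair_lborel_product_bound:
  fixes F :: "real \<times> real \<Rightarrow> real"
  assumes [measurable]: "F \<in> borel_measurable (borel \<Otimes>\<^sub>M borel)"
    and g1: "integrable lborel g1" and g2: "integrable lborel g2"
    and nonneg: "\<And>t. 0 \<le> g1 t" "\<And>t. 0 \<le> g2 t"
    and bound: "\<And>t z. \<bar>F (t, z)\<bar> \<le> g1 t * g2 z"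
  shows "integrable (lborel \<Otimes>\<^sub>M lborel) F"
proof (rule lborel_pair.Fubini_integrable)
  have [measurable]: "g1 \<in> borel_measurable borel" "g2 \<in> borel_measurable borel"
    using g1 g2 by auto
  show "F \<in> borel_measurable (lborel \<Otimes>\<^sub>M lborel)"
    by simp
  have "integrable lborel (\<lambda>z. F (t, z))" for t
  proof (rule Bochner_Integration.integrable_bound)
    show "integrable lborel (\<lambda>z. g1 t * g2 z)"
      using g2 by simp
    show "AE z in lborel. norm (F (t, z)) \<le> norm (g1 t * g2 z)"
      using bound nonneg by (intro AE_I2) simp
  qed simp
  then show "AE t in lborel. integrable lborel (\<lambda>z. F (t, z))"
    by simp
  show "integrable lborel (\<lambda>t. LINT z|lborel. norm (F (t, z)))"
  proof (rule Bochner_Integration.integrable_bound)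
    show "integrable lborel (\<lambda>t. g1 t * (LINT z|lborel. g2 z))"
      using g1 by simp
    have "norm (LINT z|lborel. norm (F (t, z))) \<le> norm (g1 t * (LINT z|lborel. g2 z))" for t
    proof -
      have "norm (LINT z|lborel. norm (F (t, z))) = (LINT z|lborel. norm (F (t, z)))"
        by (simp add: integral_nonneg_AE)
      also have "\<dots> \<le> (LINT z|lborel. g1 t * g2 z)"
        by (rule integral_mono') (use g2 bound nonneg in simp_all)
      also have "\<dots> \<le> norm (g1 t * (LINT z|lborel. g2 z))"
        by simp
      finally show ?thesis .
    qed
    then show "AE t in lborel. norm (LINT z|lborel. norm (F (t, z))) \<le> norm (g1 t * (LINT z|lborel. g2 z))"
      by simp
  qed simp
qed

lemma quadratic_nonneg_imp_discriminant:
  fixes A B D :: real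
  assumes nonneg: "\<And>t. 0 \<le> A + 2 * t * B + t\<^sup>2 * D" and "0 \<le> D"
  shows "B\<^sup>2 \<le> A * D"
proof (cases "D = 0")
  case True
  show ?thesis
  proof (rule ccontr)
    assume "\<not> B\<^sup>2 \<le> A * D"
    then have "B \<noteq> 0"
      using True by simp
    then have "A + 2 * (- (A + 1) / (2 * B)) * B = -1"
      by (simp add: field_simps)
    then show False
      using nonneg[of "- (A + 1) / (2 * B)"] True by simp
  qed
next
  case False
  then have "0 < D"
    using \<open>0 \<le> D\<close> by simp
  have "A + 2 * (- B / D) * B + (- B / D)\<^sup>2 * D = A - B\<^sup>2 / D"
    using False by (simp add: field_simps power2_eq_square)
  then have "B\<^sup>2 / D \<le> A"
    using nonneg[of "- B / D"] by simp
  then show ?thesis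
    using \<open>0 < D\<close> by (simp add: field_simps)
qed

lemma le_of_sq_le_mult:
  fixes X Y a b :: real
  assumes "X \<le> Y + b" "Y\<^sup>2 \<le> a * X" "0 \<le> a" "0 \<le> b" "0 \<le> Y"
  shows "X \<le> a + 2 * b"
proof (rule ccontr)
  assume "\<not> X \<le> a + 2 * b"
  then have "0 \<le> X - b" "X - b \<le> Y" "0 < X * (X - a - 2 * b)"
    using assms by auto
  have "(X - b)\<^sup>2 = X * (X - a - 2 * b) + a * X + b\<^sup>2"
    by (simp add: power2_eq_square algebra_simps)
  then have "a * X < (X - b)\<^sup>2"
    using \<open>0 < X * (X - a - 2 * b)\<close> zero_le_power2[of b] by linarith
  moreover have "(X - b)\<^sup>2 \<le> Y\<^sup>2"
    using \<open>X - b \<le> Y\<close> \<open>0 \<le> X - b\<close> by (rule power_mono)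
  ultimately show False
    using assms(2) by simp
qed

lemma set_integral_Cauchy_Schwarz:
  fixes r u v :: "'a \<Rightarrow> real"
  assumes [measurable]: "S \<in> sets M" "r \<in> borel_measurable M" "u \<in> borel_measurable M"
      "v \<in> borel_measurable M"
    and r_nonneg: "AE x in M. x \<in> S \<longrightarrow> 0 \<le> r x"
    and u: "set_integrable M S (\<lambda>x. r x * (u x)\<^sup>2)" and v: "set_integrable M S (\<lambda>x. r x * (v x)\<^sup>2)"
  shows "set_integrable M S (\<lambda>x. r x * u x * v x)"
    and "(LINT x:S|M. r x * u x * v x)\<^sup>2
          \<le> (LINT x:S|M. r x * (u x)\<^sup>2) * (LINT x:S|M. r x * (v x)\<^sup>2)"
proof -
  have pointwise: "norm (r x * u x * v x) \<le> norm (r x * (u x)\<^sup>2 + r x * (v x)\<^sup>2)" if "0 \<le> r x" for x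
  proof -
    have "2 * \<bar>u x * v x\<bar> \<le> (u x)\<^sup>2 + (v x)\<^sup>2"
      using sum_squares_bound[of "\<bar>u x\<bar>" "\<bar>v x\<bar>"] by (simp add: abs_mult power2_eq_square)
    then have "\<bar>u x * v x\<bar> \<le> (u x)\<^sup>2 + (v x)\<^sup>2"
      by linarith
    then have "r x * \<bar>u x * v x\<bar> \<le> r x * ((u x)\<^sup>2 + (v x)\<^sup>2)"
      using that by (rule mult_left_mono)
    then show ?thesis
      using that by (simp add: abs_mult algebra_simps)
  qed
  show uv: "set_integrable M S (\<lambda>x. r x * u x * v x)"
  proof (rule set_integrable_bound[OF set_integral_add(1)[OF u v]])
    show "set_borel_measurable M S (\<lambda>x. r x * u x * v x)"
      unfolding set_borel_measurable_def by measurable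
    show "AE x in M. x \<in> S \<longrightarrow> norm (r x * u x * v x) \<le> norm (r x * (u x)\<^sup>2 + r x * (v x)\<^sup>2)"
      using r_nonneg by eventually_elim (blast intro: pointwise)
  qed
  have "0 \<le> (LINT x:S|M. r x * (u x)\<^sup>2) + 2 * t * (LINT x:S|M. r x * u x * v x)
              + t\<^sup>2 * (LINT x:S|M. r x * (v x)\<^sup>2)" for t
  proof -
    have "0 \<le> (LINT x:S|M. r x * (u x + t * v x)\<^sup>2)"
      by (rule set_integral_nonneg_AE) (use r_nonneg in \<open>eventually_elim, simp\<close>)
    also have "\<dots> = (LINT x:S|M. r x * (u x)\<^sup>2 + (2 * t) * (r x * u x * v x) + t\<^sup>2 * (r x * (v x)\<^sup>2))"
      by (simp add: power2_eq_square algebra_simps)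
    also have "\<dots> = (LINT x:S|M. r x * (u x)\<^sup>2) + 2 * t * (LINT x:S|M. r x * u x * v x)
              + t\<^sup>2 * (LINT x:S|M. r x * (v x)\<^sup>2)"
      using u v uv by (simp add: set_integral_add(2))
    finally show ?thesis .
  qed
  moreover have "0 \<le> (LINT x:S|M. r x * (v x)\<^sup>2)"
    by (rule set_integral_nonneg_AE) (use r_nonneg in \<open>eventually_elim, simp\<close>)
  ultimately show "(LINT x:S|M. r x * u x * v x)\<^sup>2
      \<le> (LINT x:S|M. r x * (u x)\<^sup>2) * (LINT x:S|M. r x * (v x)\<^sup>2)"
    by (rule quadratic_nonneg_imp_discriminant)
qed

lemma integrable_incseq_bounded:
  fixes f :: "nat \<Rightarrow> 'a \<Rightarrow> real"
  assumes f_int: "\<And>n. integrable M (f n)" and mono: "AE x in M. mono (\<lambda>n. f n x)"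
    and lim: "AE x in M. (\<lambda>n. f n x) \<longlonglongrightarrow> u x" and u: "u \<in> borel_measurable M"
    and bound: "\<And>n. integral\<^sup>L M (f n) \<le> B"
  shows "integrable M u" "integral\<^sup>L M u \<le> B"
proof -
  have "incseq (\<lambda>n. integral\<^sup>L M (f n))"
    using mono by (intro incseq_SucI integral_mono_AE f_int) (auto elim!: eventually_mono simp: mono_def)
  then obtain L where L: "(\<lambda>n. integral\<^sup>L M (f n)) \<longlonglongrightarrow> L"
    using bound incseq_convergent by blast
  show "integrable M u"
    by (rule integrable_monotone_convergence[OF f_int mono lim L u])
  have "integral\<^sup>L M u = L"
    by (rule integral_monotone_convergence[OF f_int mono lim L u])
  moreover have "L \<le> B"
    using L bound by (intro LIMSEQ_le_const2) auto
  ultimately show "integral\<^sup>L M u \<le> B"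
    by simp
qed

lemma set_integrable_exhaustion:
  fixes g :: "'a \<Rightarrow> real"
  assumes [measurable]: "S \<in> sets M" "\<And>n. A n \<in> sets M" "g \<in> borel_measurable M"
    and "incseq A" "\<And>n. A n \<subseteq> S" and cover: "AE x in M. x \<in> S \<longrightarrow> (\<exists>n. x \<in> A n)"
    and nonneg: "AE x in M. x \<in> S \<longrightarrow> 0 \<le> g x"
    and int: "\<And>n. set_integrable M (A n) g" and bound: "\<And>n. (LINT x:A n|M. g x) \<le> B"
  shows "set_integrable M S g" "(LINT x:S|M. g x) \<le> B"
proof -
  define f where "f n x = indicator (A n) x * g x" for n x
  have mono: "AE x in M. mono (\<lambda>n. f n x)"
    using nonneg
  proof eventually_elim
    case (elim x)
    show ?case
      using elim \<open>incseq A\<close> \<open>\<And>n. A n \<subseteq> S\<close>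
      by (intro monoI) (auto simp: f_def indicator_def incseq_def)
  qed
  have lim: "AE x in M. (\<lambda>n. f n x) \<longlonglongrightarrow> indicator S x * g x"
    using cover
  proof eventually_elim
    case (elim x)
    have "eventually (\<lambda>n. f n x = indicator S x * g x) sequentially"
    proof (cases "x \<in> S")
      case True
      then obtain n where "x \<in> A n"
        using elim by blast
      then have "\<forall>m\<ge>n. x \<in> A m"
        using \<open>incseq A\<close> by (auto simp: incseq_def)
      then show ?thesis
        using True unfolding eventually_sequentially f_def by (intro exI[of _ n]) simp
    next
      case False
      then have "x \<notin> A n" for n
        using \<open>\<And>n. A n \<subseteq> S\<close> by blast
      then show ?thesis
        using False by (simp add: f_def)
    qed
    then show ?case
      by (rule tendsto_eventually)
  qed
  have f_int: "integrable M (f n)" for n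
    using int[of n] unfolding set_integrable_def f_def by simp
  have f_bound: "integral\<^sup>L M (f n) \<le> B" for n
    using bound[of n] unfolding set_lebesgue_integral_def f_def by simp
  have "(\<lambda>x. indicator S x * g x) \<in> borel_measurable M"
    by measurable
  note limit = integrable_incseq_bounded[OF f_int mono lim this f_bound]
  show "set_integrable M S g"
    using limit(1) unfolding set_integrable_def by simp
  show "(LINT x:S|M. g x) \<le> B"
    using limit(2) unfolding set_lebesgue_integral_def by simp
qed

section \<open>Primitives and test functions\<close>

text \<open>\<open>\<integral> f t * primitive_kernel c x t dt\<close> is the oriented integral of \<open>f\<close> from \<open>c\<close> to \<open>x\<close>.\<close>

definition primitive_kernel :: "real \<Rightarrow> real \<Rightarrow> real \<Rightarrow> real" where
  "primitive_kernel c x t = (if c \<le> t \<and> t < x then 1 else if x \<le> t \<and> t < c then -1 else 0)"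

lemma primitive_kernel_borel [measurable]:
  assumes [measurable]: "f \<in> borel_measurable M" "g \<in> borel_measurable M"
  shows "(\<lambda>x. primitive_kernel c (f x) (g x)) \<in> borel_measurable M"
  unfolding primitive_kernel_def by measurable

lemma abs_primitive_kernel_le: "\<bar>primitive_kernel c x t\<bar> \<le> 1"
  unfolding primitive_kernel_def by auto

lemma test_funD:
  assumes "test_fun U \<phi>"
  shows test_fun_has_deriv: "(\<phi> has_real_derivative deriv \<phi> x) (at x)"
    and test_fun_continuous_deriv: "continuous_on UNIV (deriv \<phi>)"
    and test_fun_support: "compact (closure {x. \<phi> x \<noteq> 0})" "closure {x. \<phi> x \<noteq> 0} \<subseteq> U"
    and test_fun_vanishes: "x \<notin> closure {x. \<phi> x \<noteq> 0} \<Longrightarrow> \<phi> x = 0 \<and> deriv \<phi> x = 0"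
proof -
  have diff: "(deriv ^^ k) \<phi> differentiable (at x)" for k x
    using assms unfolding test_fun_def by auto
  show "(\<phi> has_real_derivative deriv \<phi> x) (at x)" for x
  proof -
    have "\<phi> differentiable (at x)"
      using diff[of 0 x] by simp
    then show ?thesis
      by (simp only: DERIV_deriv_iff_real_differentiable)
  qed
  show "continuous_on UNIV (deriv \<phi>)"
  proof (rule continuous_at_imp_continuous_on, intro ballI)
    fix x :: real
    have "deriv \<phi> differentiable (at x)"
      using diff[of 1 x] by simp
    then have "(deriv \<phi> has_real_derivative deriv (deriv \<phi>) x) (at x)"
      by (simp only: DERIV_deriv_iff_real_differentiable)
    then show "isCont (deriv \<phi>) x"
      by (rule DERIV_isCont)
  qed
  show "compact (closure {x. \<phi> x \<noteq> 0})" "closure {x. \<phi> x \<noteq> 0} \<subseteq> U"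
    using assms unfolding test_fun_def by auto
  assume x: "x \<notin> closure {x. \<phi> x \<noteq> 0}"
  have zero: "\<phi> y = 0" if "y \<notin> closure {x. \<phi> x \<noteq> 0}" for y
  proof (rule ccontr)
    assume "\<phi> y \<noteq> 0"
    then have "y \<in> closure {x. \<phi> x \<noteq> 0}"
      by (intro subsetD[OF closure_subset]) simp
    then show False
      using that by contradiction
  qed
  have "((\<lambda>_. 0) has_real_derivative 0) (at x)" "open (- closure {x. \<phi> x \<noteq> 0})"
      "x \<in> - closure {x. \<phi> x \<noteq> 0}"
    using x by (simp_all add: open_Compl)
  moreover have "0 = \<phi> y" if "y \<in> - closure {x. \<phi> x \<noteq> 0}" for y
    using zero[OF ComplD[OF that]] by simp
  ultimately have "(\<phi> has_real_derivative 0) (at x)"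
    by (rule has_field_derivative_transform_within_open)
  then show "\<phi> x = 0 \<and> deriv \<phi> x = 0"
    using zero[OF x] by (simp add: DERIV_imp_deriv)
qed

lemma test_fun_deriv_borel [measurable]: "test_fun U \<phi> \<Longrightarrow> deriv \<phi> \<in> borel_measurable borel"
  by (rule borel_measurable_continuous_onI[OF test_fun_continuous_deriv])

lemma test_fun_integral_deriv:
  assumes "test_fun U \<phi>" "u \<le> v"
  shows "(LINT x:{u..v}|lborel. deriv \<phi> x) = \<phi> v - \<phi> u"
  unfolding set_lebesgue_integral_def
proof (rule integral_FTC_atLeastAtMost[OF assms(2)])
  show "continuous_on {u..v} (deriv \<phi>)"
    using test_fun_continuous_deriv[OF assms(1)] by (rule continuous_on_subset) simp
  show "(\<phi> has_vector_derivative deriv \<phi> x) (at x within {u..v})" for x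
    using test_fun_has_deriv[OF assms(1), of x]
    by (simp add: has_real_derivative_iff_has_vector_derivative[symmetric] has_field_derivative_at_within)
qed

text \<open>\<open>C\<close> is any admissible constant in the Poincare inequality (one exists by (H1)) and \<open>c\<close>
  the base point of all primitives.\<close>

locale poincare_interval =
  fixes I :: "real set" and p w :: "real \<Rightarrow> real" and C c :: real
  assumes open_I: "open I"
    and I_convex: "\<And>x y z. x \<in> I \<Longrightarrow> y \<in> I \<Longrightarrow> x \<le> z \<Longrightarrow> z \<le> y \<Longrightarrow> z \<in> I"
    and p_borel [measurable]: "p \<in> borel_measurable borel"
    and p_nonneg: "\<And>x. x \<in> I \<Longrightarrow> 0 \<le> p x"
    and p_integrable: "set_integrable lborel I p"
    and p_total: "(LINT x:I|lborel. p x) = 1"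
    and p_pos: "AE x in lborel. x \<in> I \<longrightarrow> 0 < p x"
    and w_borel [measurable]: "w \<in> borel_measurable borel"
    and w_pos: "AE x in lborel. x \<in> I \<longrightarrow> 0 < w x"
    and L2_loc_integrable: "\<And>f. f \<in> L2w I (\<lambda>x. p x * w x) \<Longrightarrow> loc_integrable I f"
    and C_nonneg: "0 \<le> C"
    and poincare: "\<And>h g. H1 I p w h g \<Longrightarrow> var_p I p h \<le> C * nrm2 I (\<lambda>x. p x * w x) g"
    and c_in_I: "c \<in> I"
begin

lemma I_borel [measurable]: "I \<in> sets borel"
  using open_I by simp

definition q :: "real \<Rightarrow> real" where
  "q x = p x * w x"

lemma q_eq: "(\<lambda>x. p x * w x) = q"
  by (simp add: q_def fun_eq_iff)

lemma q_borel [measurable]: "q \<in> borel_measurable borel"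
  unfolding q_def by measurable

lemma q_pos: "AE x in lborel. x \<in> I \<longrightarrow> 0 < q x"
  using p_pos w_pos by eventually_elim (simp add: q_def)

definition pmean :: "(real \<Rightarrow> real) \<Rightarrow> real" where
  "pmean u = (LINT x:I|lborel. p x * u x)"

definition centered :: "(real \<Rightarrow> real) \<Rightarrow> real \<Rightarrow> real" where
  "centered u x = u x - pmean u"

lemma centered_borel [measurable]:
  assumes [measurable]: "u \<in> borel_measurable borel"
  shows "centered u \<in> borel_measurable borel"
  unfolding centered_def by measurable

lemma L2wD:
  assumes "f \<in> L2w I r"
  shows "f \<in> borel_measurable borel" "set_integrable lborel I (\<lambda>x. r x * (f x)\<^sup>2)"
  using assms unfolding L2w_def by auto

lemma nrm2_p_nonneg: "0 \<le> nrm2 I p f"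
  unfolding nrm2_def by (rule set_integral_nonneg_AE) (simp add: p_nonneg)

lemma nrm2_q_nonneg: "0 \<le> nrm2 I q f"
proof -
  have "AE x in lborel. x \<in> I \<longrightarrow> 0 \<le> q x * (f x)\<^sup>2"
    using q_pos by eventually_elim (simp add: less_imp_le)
  then show ?thesis
    unfolding nrm2_def by (rule set_integral_nonneg_AE)
qed

lemma L2w_p_integrable:
  assumes "u \<in> L2w I p"
  shows "set_integrable lborel I (\<lambda>x. p x * u x)"
proof -
  note L2wD[OF assms]
  note [measurable] = this(1)
  have bound: "norm (p x * u x) \<le> norm (p x + p x * (u x)\<^sup>2)" if "x \<in> I" for x
  proof -
    have "\<bar>u x\<bar> \<le> 1 + (u x)\<^sup>2"
      using sum_squares_bound[of 1 "\<bar>u x\<bar>"] by (simp add: power2_eq_square)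
    then show ?thesis
      using p_nonneg[OF that] mult_left_mono[of "\<bar>u x\<bar>" "1 + (u x)\<^sup>2" "p x"]
      by (simp add: abs_mult algebra_simps)
  qed
  show ?thesis
  proof (rule set_integrable_bound)
    show "set_integrable lborel I (\<lambda>x. p x + p x * (u x)\<^sup>2)"
      using p_integrable \<open>set_integrable lborel I (\<lambda>x. p x * (u x)\<^sup>2)\<close> by (rule set_integral_add)
    show "set_borel_measurable lborel I (\<lambda>x. p x * u x)"
      unfolding set_borel_measurable_def by measurable
    show "AE x in lborel. x \<in> I \<longrightarrow> norm (p x * u x) \<le> norm (p x + p x * (u x)\<^sup>2)"
      using bound by (intro AE_I2 impI)
  qed
qed

lemma bounded_in_L2w:
  assumes [measurable]: "u \<in> borel_measurable borel" and bound: "\<And>x. x \<in> I \<Longrightarrow> \<bar>u x\<bar> \<le> N"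
  shows "u \<in> L2w I p"
proof -
  have bound: "norm (p x * (u x)\<^sup>2) \<le> norm (N\<^sup>2 * p x)" if "x \<in> I" for x
  proof -
    have "(u x)\<^sup>2 \<le> N\<^sup>2"
      using power_mono[OF bound[OF that] abs_ge_zero, of 2] by simp
    then show ?thesis
      using p_nonneg[OF that] mult_left_mono[of "(u x)\<^sup>2" "N\<^sup>2" "p x"] by (simp add: mult.commute)
  qed
  have "set_integrable lborel I (\<lambda>x. p x * (u x)\<^sup>2)"
  proof (rule set_integrable_bound)
    show "set_integrable lborel I (\<lambda>x. N\<^sup>2 * p x)"
      using p_integrable by simp
    show "set_borel_measurable lborel I (\<lambda>x. p x * (u x)\<^sup>2)"
      unfolding set_borel_measurable_def by measurable
    show "AE x in lborel. x \<in> I \<longrightarrow> norm (p x * (u x)\<^sup>2) \<le> norm (N\<^sup>2 * p x)"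
      using bound by (intro AE_I2 impI)
  qed
  then show ?thesis
    unfolding L2w_def by simp
qed

lemma L2w_diff:
  assumes "u \<in> L2w I p" "v \<in> L2w I p"
  shows "(\<lambda>x. u x - v x) \<in> L2w I p"
proof -
  note [measurable] = L2wD(1)[OF assms(1)] L2wD(1)[OF assms(2)]
  have bound: "norm (p x * (u x - v x)\<^sup>2) \<le> norm (2 * (p x * (u x)\<^sup>2) + 2 * (p x * (v x)\<^sup>2))"
    if "x \<in> I" for x
  proof -
    have "(u x - v x)\<^sup>2 \<le> 2 * (u x)\<^sup>2 + 2 * (v x)\<^sup>2"
      using zero_le_power2[of "u x + v x"] by (simp add: power2_eq_square algebra_simps)
    then have "p x * (u x - v x)\<^sup>2 \<le> p x * (2 * (u x)\<^sup>2 + 2 * (v x)\<^sup>2)"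
      using p_nonneg[OF that] by (rule mult_left_mono)
    then show ?thesis
      using p_nonneg[OF that] by (simp add: algebra_simps)
  qed
  have "set_integrable lborel I (\<lambda>x. p x * (u x - v x)\<^sup>2)"
  proof (rule set_integrable_bound)
    show "set_integrable lborel I (\<lambda>x. 2 * (p x * (u x)\<^sup>2) + 2 * (p x * (v x)\<^sup>2))"
      using L2wD(2)[OF assms(1)] L2wD(2)[OF assms(2)] by (intro set_integral_add) auto
    show "set_borel_measurable lborel I (\<lambda>x. p x * (u x - v x)\<^sup>2)"
      unfolding set_borel_measurable_def by measurable
    show "AE x in lborel. x \<in> I \<longrightarrow> norm (p x * (u x - v x)\<^sup>2)
        \<le> norm (2 * (p x * (u x)\<^sup>2) + 2 * (p x * (v x)\<^sup>2))"
      using bound by (intro AE_I2 impI)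
  qed
  then show ?thesis
    unfolding L2w_def by simp
qed

lemma L2w_const: "(\<lambda>x. k) \<in> L2w I p"
  by (rule bounded_in_L2w[of _ "\<bar>k\<bar>"]) auto

lemma L2w_uminus_iff: "(\<lambda>x. - h x) \<in> L2w I r \<longleftrightarrow> h \<in> L2w I r"
  unfolding L2w_def by auto

lemma pmean_diff:
  assumes "set_integrable lborel I (\<lambda>x. p x * u x)" "set_integrable lborel I (\<lambda>x. p x * v x)"
  shows "pmean (\<lambda>x. u x - v x) = pmean u - pmean v"
  using set_integral_diff(2)[OF assms] unfolding pmean_def by (simp add: right_diff_distrib)

lemma pmean_const: "pmean (\<lambda>x. k) = k"
  unfolding pmean_def using p_total by (simp add: mult.commute)

lemma centered_L2w: "u \<in> L2w I p \<Longrightarrow> centered u \<in> L2w I p"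
  unfolding centered_def by (rule L2w_diff[OF _ L2w_const])

lemma pmean_centered:
  assumes "u \<in> L2w I p"
  shows "pmean (centered u) = 0"
  using pmean_diff[OF L2w_p_integrable[OF assms] L2w_p_integrable[OF L2w_const]]
  unfolding centered_def pmean_const by simp

lemma nrm2_centered:
  assumes "u \<in> L2w I p"
  shows "nrm2 I p (centered u) = var_p I p u"
proof -
  define m where "m = pmean u"
  have int: "set_integrable lborel I (\<lambda>x. p x * (u x)\<^sup>2 - (2 * m) * (p x * u x))"
    using L2wD(2)[OF assms] L2w_p_integrable[OF assms] by (intro set_integral_diff(1)) auto
  have "nrm2 I p (centered u) = (LINT x:I|lborel. (p x * (u x)\<^sup>2 - (2 * m) * (p x * u x)) + m\<^sup>2 * p x)"
    unfolding nrm2_def centered_def m_def[symmetric] by (simp add: power2_eq_square algebra_simps)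
  also have "\<dots> = (LINT x:I|lborel. p x * (u x)\<^sup>2) - 2 * m * m + m\<^sup>2"
    using int p_integrable L2wD(2)[OF assms] L2w_p_integrable[OF assms]
    by (simp add: p_total m_def pmean_def)
  also have "\<dots> = var_p I p u"
    unfolding var_p_def m_def pmean_def by (simp add: power2_eq_square)
  finally show ?thesis .
qed

lemma nrm2_centered_le:
  assumes "u \<in> L2w I p"
  shows "nrm2 I p (centered u) \<le> nrm2 I p u"
proof -
  have "var_p I p u \<le> nrm2 I p u"
    unfolding var_p_def nrm2_def by simp
  then show ?thesis
    using nrm2_centered[OF assms] by simp
qed

lemma indicator_I_le: "indicator {z\<in>I. z \<le> x} z = (indicator I z * (if z \<le> x then 1 else 0) :: real)"
  by (auto simp: indicator_def)

lemma cdf_borel [measurable]: "cdf I p \<in> borel_measurable borel"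
  unfolding cdf_def set_lebesgue_integral_def indicator_I_le by measurable

lemma set_integral_split_at:
  fixes g :: "real \<Rightarrow> real"
  assumes "set_integrable lborel I g"
  shows "(LINT y:{y\<in>I. x < y}|lborel. g y) = (LINT y:I|lborel. g y) - (LINT y:{y\<in>I. y \<le> x}|lborel. g y)"
proof -
  have "set_integrable lborel {y\<in>I. x < y} g" "set_integrable lborel {y\<in>I. y \<le> x} g"
    by (rule set_integrable_subset[OF assms]; auto)+
  moreover have "(\<lambda>y. indicator I y *\<^sub>R g y)
      = (\<lambda>y. indicator {y\<in>I. x < y} y *\<^sub>R g y + indicator {y\<in>I. y \<le> x} y *\<^sub>R g y)"
    by (auto simp: indicator_def fun_eq_iff)
  ultimately show ?thesis
    unfolding set_lebesgue_integral_def set_integrable_def by simp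
qed

lemma cdf_nonneg: "0 \<le> cdf I p x"
  unfolding cdf_def by (rule set_integral_nonneg_AE) (simp add: p_nonneg)

lemma cdf_le_1: "cdf I p x \<le> 1"
  using set_integral_mono_subset[OF p_integrable, of "{y\<in>I. y \<le> x}"] p_nonneg p_total
  unfolding cdf_def by auto

lemma integral_p_greater: "(LINT y:{y\<in>I. x < y}|lborel. p y) = 1 - cdf I p x"
  unfolding cdf_def using set_integral_split_at[OF p_integrable, of x] p_total by simp

lemma set_integral_p_pos:
  assumes [measurable]: "U \<in> sets borel" and U: "U \<subseteq> I" and "emeasure lborel U \<noteq> 0"
  shows "0 < (LINT z:U|lborel. p z)"
proof -
  have eq: "(LINT z:U|lborel. p z) = (LINT z:U|lborel. indicator I z * p z)"
    using U by (intro set_lebesgue_integral_cong) (auto simp: indicator_def)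
  have int: "integrable lborel (\<lambda>z. indicator I z * p z)"
    using p_integrable unfolding set_integrable_def by simp
  have pos: "AE z in lborel. z \<in> U \<longrightarrow> 0 < indicator I z * p z"
    using p_pos by eventually_elim (use U in \<open>auto simp: indicator_def\<close>)
  then have "AE z in lborel. z \<in> U \<longrightarrow> 0 \<le> indicator I z * p z"
    by eventually_elim auto
  then have "0 \<le> (LINT z:U|lborel. indicator I z * p z)"
    by (rule set_integral_nonneg_AE)
  moreover have "U \<notin> null_sets lborel"
    using assms(3) by (simp add: null_sets_def)
  then have "(LINT z:U|lborel. indicator I z * p z) \<noteq> 0"
    using null_if_pos_func_has_zero_int[OF int _ pos] by auto
  ultimately show ?thesis
    using eq by simp
qed

lemma cdf_strict_bounds:
  assumes "x \<in> I"
  shows "0 < cdf I p x" "cdf I p x < 1"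
proof -
  obtain e where "0 < e" "ball x e \<subseteq> I"
    using openE[OF open_I assms] by blast
  then have left: "{x - e<..<x} \<subseteq> I" and right: "{x<..<x + e} \<subseteq> I"
    by (auto simp: dist_real_def ball_def)
  have "0 < (LINT z:{x - e<..<x}|lborel. p z)"
    using left \<open>0 < e\<close> by (intro set_integral_p_pos) auto
  also have "\<dots> \<le> cdf I p x"
    unfolding cdf_def using left
    by (intro set_integral_mono_subset[OF set_integrable_subset[OF p_integrable]]) (auto simp: p_nonneg)
  finally show "0 < cdf I p x" .
  have "0 < (LINT z:{x<..<x + e}|lborel. p z)"
    using right \<open>0 < e\<close> by (intro set_integral_p_pos) auto
  also have "\<dots> \<le> (LINT y:{y\<in>I. x < y}|lborel. p y)"
    using right
    by (intro set_integral_mono_subset[OF set_integrable_subset[OF p_integrable]]) (auto simp: p_nonneg)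
  finally show "cdf I p x < 1"
    unfolding integral_p_greater by simp
qed

lemma compact_bracket:
  assumes "compact K" "K \<subseteq> I" "K \<noteq> {}"
  obtains \<alpha> \<beta> where "\<alpha> \<in> I" "\<beta> \<in> I" "K \<subseteq> {\<alpha><..<\<beta>}"
proof -
  obtain m where m: "m \<in> K" "\<And>y. y \<in> K \<Longrightarrow> m \<le> y"
    using compact_attains_inf[OF assms(1,3)] by blast
  obtain M where M: "M \<in> K" "\<And>y. y \<in> K \<Longrightarrow> y \<le> M"
    using compact_attains_sup[OF assms(1,3)] by blast
  obtain e where e: "0 < e" "ball m e \<subseteq> I"
    using openE[OF open_I] m(1) assms(2) by blast
  obtain e' where e': "0 < e'" "ball M e' \<subseteq> I"
    using openE[OF open_I] M(1) assms(2) by blast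
  have "m - e / 2 \<in> I"
    using e by (intro subsetD[OF e(2)]) (simp add: dist_real_def)
  moreover have "M + e' / 2 \<in> I"
    using e' by (intro subsetD[OF e'(2)]) (simp add: dist_real_def)
  moreover have "K \<subseteq> {m - e / 2<..<M + e' / 2}"
    using m(2) M(2) e(1) e'(1) by force
  ultimately show ?thesis
    by (rule that)
qed

lemma Icc_subset_I: "\<alpha> \<in> I \<Longrightarrow> \<beta> \<in> I \<Longrightarrow> {\<alpha>..\<beta>} \<subseteq> I"
  using I_convex[of \<alpha> \<beta>] by auto

lemma loc_integrable_Icc:
  assumes "loc_integrable I f" "\<alpha> \<in> I" "\<beta> \<in> I"
  shows "set_integrable lborel {\<alpha>..\<beta>} f"
  using assms Icc_subset_I[OF assms(2,3)] unfolding loc_integrable_def by blast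

lemma loc_integrable_bounded:
  assumes [measurable]: "f \<in> borel_measurable borel" and "\<And>x. \<bar>f x\<bar> \<le> B"
  shows "loc_integrable I f"
  unfolding loc_integrable_def
proof safe
  fix K assume "compact K" "K \<subseteq> I"
  then show "set_integrable lborel K f"
    using assms(2) by (intro set_integrable_bounded_lborel)
      (auto intro: borel_closed compact_imp_closed compact_imp_bounded)
qed

definition primitive :: "(real \<Rightarrow> real) \<Rightarrow> real \<Rightarrow> real" where
  "primitive f x = (LINT t:I|lborel. f t * primitive_kernel c x t)"

lemma primitive_borel [measurable]:
  assumes [measurable]: "f \<in> borel_measurable borel"
  shows "primitive f \<in> borel_measurable borel"
  unfolding primitive_def set_lebesgue_integral_def by measurable

lemma abs_primitive_le:
  assumes "S \<in> sets borel" and f: "set_integrable lborel S f"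
    and support: "\<And>t. t \<in> I \<Longrightarrow> primitive_kernel c x t \<noteq> 0 \<Longrightarrow> t \<in> S"
  shows "\<bar>primitive f x\<bar> \<le> (LINT t:S|lborel. \<bar>f t\<bar>)"
  unfolding primitive_def set_lebesgue_integral_def
proof (rule abs_integral_le_integral)
  show "integrable lborel (\<lambda>t. indicator S t *\<^sub>R \<bar>f t\<bar>)"
    using set_integrable_abs[OF f] unfolding set_integrable_def .
  show "\<bar>indicator I t *\<^sub>R (f t * primitive_kernel c x t)\<bar> \<le> indicator S t *\<^sub>R \<bar>f t\<bar>" for t
  proof (cases "t \<in> I \<and> primitive_kernel c x t \<noteq> 0")
    case True
    then have "\<bar>f t\<bar> * \<bar>primitive_kernel c x t\<bar> \<le> \<bar>f t\<bar> * 1"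
      by (intro mult_left_mono abs_primitive_kernel_le) auto
    then show ?thesis
      using True support by (simp add: abs_mult)
  qed auto
qed

lemma primitive_loc_integrable:
  assumes [measurable]: "f \<in> borel_measurable borel" and "loc_integrable I f"
  shows "loc_integrable I (primitive f)"
  unfolding loc_integrable_def
proof safe
  fix K assume K: "compact K" "K \<subseteq> I"
  obtain \<alpha> \<beta> where "\<alpha> \<in> I" "\<beta> \<in> I" and bracket: "insert c K \<subseteq> {\<alpha><..<\<beta>}"
    using compact_bracket[of "insert c K"] K c_in_I by auto
  have f_int: "set_integrable lborel {\<alpha>..\<beta>} f"
    by (rule loc_integrable_Icc) fact+
  show "set_integrable lborel K (primitive f)"
  proof (rule set_integrable_bounded_lborel)
    show "K \<in> sets borel" "bounded K"
      using K by (auto intro: borel_closed compact_imp_closed compact_imp_bounded)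
    show "\<bar>primitive f x\<bar> \<le> (LINT t:{\<alpha>..\<beta>}|lborel. \<bar>f t\<bar>)" if "x \<in> K" for x
      using bracket that
      by (intro abs_primitive_le[OF _ f_int]) (auto simp: primitive_kernel_def split: if_splits)
  qed simp
qed

lemma test_fun_bracket:
  assumes "test_fun I \<phi>" "t \<in> I"
  obtains \<alpha> \<beta> where "\<alpha> \<in> I" "\<beta> \<in> I" "\<alpha> < t" "t < \<beta>" "\<alpha> < c" "c < \<beta>"
    "\<And>x. x \<le> \<alpha> \<or> \<beta> \<le> x \<Longrightarrow> \<phi> x = 0 \<and> deriv \<phi> x = 0"
proof -
  let ?K = "insert t (insert c (closure {x. \<phi> x \<noteq> 0}))"
  have "compact ?K" "?K \<subseteq> I"
    using test_fun_support[OF assms(1)] assms(2) c_in_I by auto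
  then obtain \<alpha> \<beta> where "\<alpha> \<in> I" "\<beta> \<in> I" and bracket: "?K \<subseteq> {\<alpha><..<\<beta>}"
    using compact_bracket by blast
  moreover have "\<phi> x = 0 \<and> deriv \<phi> x = 0" if "x \<le> \<alpha> \<or> \<beta> \<le> x" for x
    using bracket that by (intro test_fun_vanishes[OF assms(1)]) auto
  ultimately show ?thesis
    using that by auto
qed

lemma test_fun_deriv_integrable:
  assumes "test_fun I \<phi>"
  shows "integrable lborel (deriv \<phi>)"
proof -
  let ?K = "closure {x. \<phi> x \<noteq> 0}"
  have "integrable lborel (\<lambda>x. indicator ?K x *\<^sub>R deriv \<phi> x)"
    using test_fun_support(1)[OF assms] continuous_on_subset[OF test_fun_continuous_deriv[OF assms]]
    by (intro borel_integrable_compact) auto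
  moreover have "(\<lambda>x. indicator ?K x *\<^sub>R deriv \<phi> x) = deriv \<phi>"
  proof
    show "indicator ?K x *\<^sub>R deriv \<phi> x = deriv \<phi> x" for x
      using test_fun_vanishes[OF assms, of x] by (cases "x \<in> ?K") auto
  qed
  ultimately show ?thesis
    by metis
qed

lemma test_fun_integral_deriv_le:
  assumes tf: "test_fun I \<phi>" and "t \<in> I"
  shows "(LINT x:{x\<in>I. x \<le> t}|lborel. deriv \<phi> x) = \<phi> t"
proof -
  obtain \<alpha> \<beta> where "\<alpha> \<in> I" "\<alpha> < t" and vanish: "\<And>x. x \<le> \<alpha> \<Longrightarrow> \<phi> x = 0 \<and> deriv \<phi> x = 0"
    using test_fun_bracket[OF assms] by metis
  have eq: "indicator {x\<in>I. x \<le> t} x *\<^sub>R deriv \<phi> x = indicator {\<alpha>..t} x *\<^sub>R deriv \<phi> x" for x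
  proof (cases "\<alpha> < x")
    case True
    then have "x \<le> t \<Longrightarrow> x \<in> I"
      using I_convex[OF \<open>\<alpha> \<in> I\<close> \<open>t \<in> I\<close>, of x] by simp
    then show ?thesis
      using True by (auto simp: indicator_def)
  qed (use vanish[of x] in simp)
  have "(LINT x:{x\<in>I. x \<le> t}|lborel. deriv \<phi> x) = (LINT x:{\<alpha>..t}|lborel. deriv \<phi> x)"
    unfolding set_lebesgue_integral_def by (rule Bochner_Integration.integral_cong[OF refl eq])
  also have "\<dots> = \<phi> t"
    using test_fun_integral_deriv[OF tf, of \<alpha> t] \<open>\<alpha> < t\<close> vanish[of \<alpha>] by simp
  finally show ?thesis .
qed

lemma test_fun_integral_deriv_I:
  assumes tf: "test_fun I \<phi>"
  shows "(LINT x:I|lborel. deriv \<phi> x) = 0"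
proof -
  obtain \<alpha> \<beta> where "\<beta> \<in> I" and vanish: "\<And>x. \<beta> \<le> x \<Longrightarrow> \<phi> x = 0 \<and> deriv \<phi> x = 0"
    using test_fun_bracket[OF assms c_in_I] by metis
  have "(LINT x:I|lborel. deriv \<phi> x) = (LINT x:{x\<in>I. x \<le> \<beta>}|lborel. deriv \<phi> x)"
    unfolding set_lebesgue_integral_def
    by (intro Bochner_Integration.integral_cong refl) (use vanish in \<open>auto simp: indicator_def\<close>)
  also have "\<dots> = 0"
    using test_fun_integral_deriv_le[OF tf \<open>\<beta> \<in> I\<close>] vanish[of \<beta>] by simp
  finally show ?thesis .
qed

lemma integral_deriv_mult_primitive_kernel:
  assumes tf: "test_fun I \<phi>" and "t \<in> I"
  shows "(LINT x:I|lborel. deriv \<phi> x * primitive_kernel c x t) = - \<phi> t"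
proof -
  have int: "set_integrable lborel A (deriv \<phi>)" if "A \<in> sets borel" for A
    using test_fun_deriv_integrable[OF tf] that unfolding set_integrable_def
    by (intro integrable_mult_indicator) auto
  show ?thesis
  proof (cases "c \<le> t")
    case True
    have "(LINT x:I|lborel. deriv \<phi> x * primitive_kernel c x t) = (LINT x:{x\<in>I. t < x}|lborel. deriv \<phi> x)"
      unfolding set_lebesgue_integral_def
      by (rule Bochner_Integration.integral_cong[OF refl]) (use True in \<open>auto simp: primitive_kernel_def indicator_def\<close>)
    also have "\<dots> = (LINT x:I|lborel. deriv \<phi> x) - (LINT x:{x\<in>I. x \<le> t}|lborel. deriv \<phi> x)"
      by (rule set_integral_split_at[OF int]) simp
    finally show ?thesis
      using test_fun_integral_deriv_I[OF tf] test_fun_integral_deriv_le[OF assms] by simp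
  next
    case False
    have "(LINT x:I|lborel. deriv \<phi> x * primitive_kernel c x t) = (LINT x:{x\<in>I. x \<le> t}|lborel. - deriv \<phi> x)"
      unfolding set_lebesgue_integral_def
      by (rule Bochner_Integration.integral_cong[OF refl]) (use False in \<open>auto simp: primitive_kernel_def indicator_def\<close>)
    then show ?thesis
      using test_fun_integral_deriv_le[OF assms] unfolding set_lebesgue_integral_def by simp
  qed
qed

lemma integrable_test_fun_primitive_integrand:
  assumes [measurable]: "f \<in> borel_measurable borel" and "loc_integrable I f" and tf: "test_fun I \<phi>"
  shows "integrable (lborel \<Otimes>\<^sub>M lborel)
           (\<lambda>(x, t). indicator I x * deriv \<phi> x * (indicator I t * f t * primitive_kernel c x t))"
    (is "integrable _ ?G")
proof -
  obtain \<alpha> \<beta> where "\<alpha> \<in> I" "\<beta> \<in> I" "\<alpha> < c" "c < \<beta>"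
    and vanish: "\<And>x. x \<le> \<alpha> \<or> \<beta> \<le> x \<Longrightarrow> \<phi> x = 0 \<and> deriv \<phi> x = 0"
    using test_fun_bracket[OF tf c_in_I] by metis
  have [measurable]: "deriv \<phi> \<in> borel_measurable borel"
    using tf by (rule test_fun_deriv_borel)
  show ?thesis
  proof (rule integrable_pair_lborel_product_bound)
    show "integrable lborel (\<lambda>x. indicator {\<alpha>..\<beta>} x * \<bar>deriv \<phi> x\<bar>)"
      using set_integrable_abs[OF borel_integrable_atLeastAtMost'[OF
          continuous_on_subset[OF test_fun_continuous_deriv[OF tf]]]]
      unfolding set_integrable_def by simp
    show "integrable lborel (\<lambda>t. indicator {\<alpha>..\<beta>} t * \<bar>f t\<bar>)"
      using set_integrable_abs[OF loc_integrable_Icc] assms \<open>\<alpha> \<in> I\<close> \<open>\<beta> \<in> I\<close>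
      unfolding set_integrable_def by simp
    show "\<bar>?G (x, t)\<bar> \<le> indicator {\<alpha>..\<beta>} x * \<bar>deriv \<phi> x\<bar> * (indicator {\<alpha>..\<beta>} t * \<bar>f t\<bar>)" for x t
    proof (cases "deriv \<phi> x = 0 \<or> primitive_kernel c x t = 0")
      case False
      then have "\<alpha> < x" "x < \<beta>"
        using vanish[of x] by force+
      moreover have "\<alpha> \<le> t \<and> t \<le> \<beta>"
        using False \<open>\<alpha> < c\<close> \<open>c < \<beta>\<close> calculation unfolding primitive_kernel_def by (auto split: if_splits)
      moreover have "\<bar>?G (x, t)\<bar>
          = indicator I x * indicator I t * (\<bar>deriv \<phi> x\<bar> * \<bar>f t\<bar>) * \<bar>primitive_kernel c x t\<bar>"
        by (simp add: abs_mult)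
      moreover have "\<dots> \<le> 1 * 1 * (\<bar>deriv \<phi> x\<bar> * \<bar>f t\<bar>) * 1"
        by (intro mult_mono abs_primitive_kernel_le) (auto simp: indicator_def)
      ultimately show ?thesis
        by simp
    qed auto
  qed auto
qed

lemma integral_primitive_mult_deriv:
  assumes [measurable]: "f \<in> borel_measurable borel" and "loc_integrable I f" and tf: "test_fun I \<phi>"
  shows "(LINT x:I|lborel. primitive f x * deriv \<phi> x) = - (LINT x:I|lborel. f x * \<phi> x)"
proof -
  define G where "G x t = indicator I x * deriv \<phi> x * (indicator I t * f t * primitive_kernel c x t)"
    for x t :: real
  have "(LBINT t. LBINT x. G x t) = (LBINT x. LBINT t. G x t)"
    using integrable_test_fun_primitive_integrand[OF assms]
    by (intro lborel_pair.Fubini_integral) (simp add: G_def case_prod_beta')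
  moreover have "(LBINT t. G x t) = indicator I x * (primitive f x * deriv \<phi> x)" for x
  proof -
    have "G x = (\<lambda>t. (indicator I x * deriv \<phi> x) * (indicator I t *\<^sub>R (f t * primitive_kernel c x t)))"
      by (simp add: G_def fun_eq_iff)
    then show ?thesis
      unfolding primitive_def set_lebesgue_integral_def by simp
  qed
  moreover have "(LBINT x. G x t) = indicator I t * (- (f t * \<phi> t))" for t
  proof (cases "t \<in> I")
    case True
    have "(\<lambda>x. G x t) = (\<lambda>x. f t * (indicator I x *\<^sub>R (deriv \<phi> x * primitive_kernel c x t)))"
      using True by (simp add: G_def fun_eq_iff)
    then have "(LBINT x. G x t) = f t * (LINT x:I|lborel. deriv \<phi> x * primitive_kernel c x t)"
      unfolding set_lebesgue_integral_def by simp
    then show ?thesis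
      using integral_deriv_mult_primitive_kernel[OF tf True] True by simp
  qed (simp add: G_def)
  ultimately show ?thesis
    unfolding set_lebesgue_integral_def by simp
qed

lemma weak_deriv_primitive:
  assumes "f \<in> borel_measurable borel" "loc_integrable I f"
  shows "weak_deriv I (primitive f) f"
  unfolding weak_deriv_def
  using assms primitive_loc_integrable integral_primitive_mult_deriv by blast

subsection \<open>The operator \<open>\<psi> \<mapsto> (\<integral>\<^sub>a\<^sup>x p \<psi>) / (p w)\<close>\<close>

definition cumul :: "(real \<Rightarrow> real) \<Rightarrow> real \<Rightarrow> real" where
  "cumul \<psi> x = (LINT z:{z\<in>I. z \<le> x}|lborel. p z * \<psi> z)"

definition cumul_over_q :: "(real \<Rightarrow> real) \<Rightarrow> real \<Rightarrow> real" where
  "cumul_over_q \<psi> x = cumul \<psi> x / q x"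

lemma cumul_borel [measurable]:
  assumes [measurable]: "\<psi> \<in> borel_measurable borel"
  shows "cumul \<psi> \<in> borel_measurable borel"
  unfolding cumul_def set_lebesgue_integral_def indicator_I_le by measurable

lemma cumul_over_q_borel [measurable]:
  assumes [measurable]: "\<psi> \<in> borel_measurable borel"
  shows "cumul_over_q \<psi> \<in> borel_measurable borel"
  unfolding cumul_over_q_def by measurable

lemma abs_cumul_le:
  assumes "set_integrable lborel I (\<lambda>z. p z * \<psi> z)"
  shows "\<bar>cumul \<psi> x\<bar> \<le> (LINT z:I|lborel. \<bar>p z * \<psi> z\<bar>)"
  unfolding cumul_def set_lebesgue_integral_def
proof (rule abs_integral_le_integral)
  show "integrable lborel (\<lambda>z. indicator I z *\<^sub>R \<bar>p z * \<psi> z\<bar>)"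
    using set_integrable_abs[OF assms] unfolding set_integrable_def .
  show "\<bar>indicator {z \<in> I. z \<le> x} z *\<^sub>R (p z * \<psi> z)\<bar> \<le> indicator I z *\<^sub>R \<bar>p z * \<psi> z\<bar>" for z
    by (auto simp: indicator_def)
qed

lemma integral_p_mult_primitive_kernel:
  assumes int: "set_integrable lborel I (\<lambda>z. p z * \<psi> z)" and mean: "pmean \<psi> = 0"
  shows "(LINT z:I|lborel. p z * \<psi> z * primitive_kernel c z t) = - cumul \<psi> t"
proof (cases "c \<le> t")
  case True
  have "(LINT z:I|lborel. p z * \<psi> z * primitive_kernel c z t) = (LINT z:{z\<in>I. t < z}|lborel. p z * \<psi> z)"
    unfolding set_lebesgue_integral_def
    by (rule Bochner_Integration.integral_cong[OF refl]) (use True in \<open>auto simp: indicator_def primitive_kernel_def\<close>)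
  then show ?thesis
    using set_integral_split_at[OF int, of t] mean unfolding cumul_def pmean_def by simp
next
  case False
  have "(LINT z:I|lborel. p z * \<psi> z * primitive_kernel c z t) = (LINT z:{z\<in>I. z \<le> t}|lborel. - (p z * \<psi> z))"
    unfolding set_lebesgue_integral_def
    by (rule Bochner_Integration.integral_cong[OF refl]) (use False in \<open>auto simp: indicator_def primitive_kernel_def\<close>)
  then show ?thesis
    unfolding cumul_def set_lebesgue_integral_def by simp
qed

definition fubini_integrand :: "(real \<Rightarrow> real) \<Rightarrow> (real \<Rightarrow> real) \<Rightarrow> real \<times> real \<Rightarrow> real" where
  "fubini_integrand f \<psi> =
     (\<lambda>(t, z). indicator I t * f t * (indicator I z * (p z * \<psi> z)) * primitive_kernel c z t)"

lemma fubini_integrand_borel [measurable]: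
  assumes [measurable]: "f \<in> borel_measurable borel" "\<psi> \<in> borel_measurable borel"
  shows "fubini_integrand f \<psi> \<in> borel_measurable (borel \<Otimes>\<^sub>M borel)"
  unfolding fubini_integrand_def by measurable

lemma integral_p_mult_primitive_swap:
  assumes int: "integrable (lborel \<Otimes>\<^sub>M lborel) (fubini_integrand f \<psi>)"
  shows "set_integrable lborel I (\<lambda>z. p z * \<psi> z * primitive f z)"
    and "set_integrable lborel I (\<lambda>t. f t * (LINT z:I|lborel. p z * \<psi> z * primitive_kernel c z t))"
    and "(LINT z:I|lborel. p z * \<psi> z * primitive f z)
          = (LINT t:I|lborel. f t * (LINT z:I|lborel. p z * \<psi> z * primitive_kernel c z t))"
proof -
  define F where "F t z = fubini_integrand f \<psi> (t, z)" for t z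
  have F_int: "integrable (lborel \<Otimes>\<^sub>M lborel) (\<lambda>(t, z). F t z)"
    using int by (simp add: F_def case_prod_beta')
  have inner_z: "(LBINT z. F t z)
      = indicator I t *\<^sub>R (f t * (LINT z:I|lborel. p z * \<psi> z * primitive_kernel c z t))" for t
  proof -
    have "F t = (\<lambda>z. (indicator I t * f t) * (indicator I z *\<^sub>R (p z * \<psi> z * primitive_kernel c z t)))"
      by (simp add: F_def fubini_integrand_def fun_eq_iff)
    then show ?thesis
      unfolding set_lebesgue_integral_def by simp
  qed
  have inner_t: "(LBINT t. F t z) = indicator I z *\<^sub>R (p z * \<psi> z * primitive f z)" for z
  proof -
    have "(\<lambda>t. F t z) = (\<lambda>t. (indicator I z * (p z * \<psi> z)) * (indicator I t *\<^sub>R (f t * primitive_kernel c z t)))"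
      by (simp add: F_def fubini_integrand_def fun_eq_iff)
    then show ?thesis
      unfolding primitive_def set_lebesgue_integral_def by simp
  qed
  have "integrable lborel (\<lambda>t. LBINT z. F t z)"
    using lborel_pair.integrable_fst'[OF F_int] by simp
  then show "set_integrable lborel I (\<lambda>t. f t * (LINT z:I|lborel. p z * \<psi> z * primitive_kernel c z t))"
    unfolding inner_z set_integrable_def .
  have "integrable (lborel \<Otimes>\<^sub>M lborel) (\<lambda>(z, t). F t z)"
    using lborel_pair.integrable_product_swap[OF F_int] by (simp add: case_prod_beta')
  from lborel_pair.integrable_fst'[OF this] have "integrable lborel (\<lambda>z. LBINT t. F t z)"
    by simp
  then show "set_integrable lborel I (\<lambda>z. p z * \<psi> z * primitive f z)"
    unfolding inner_t set_integrable_def .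
  have "(LBINT z. LBINT t. F t z) = (LBINT t. LBINT z. F t z)"
    using F_int by (rule lborel_pair.Fubini_integral)
  then show "(LINT z:I|lborel. p z * \<psi> z * primitive f z)
      = (LINT t:I|lborel. f t * (LINT z:I|lborel. p z * \<psi> z * primitive_kernel c z t))"
    unfolding inner_z inner_t set_lebesgue_integral_def .
qed

lemma integral_p_mult_primitive:
  assumes int: "integrable (lborel \<Otimes>\<^sub>M lborel) (fubini_integrand f \<psi>)"
    and "set_integrable lborel I (\<lambda>z. p z * \<psi> z)" "pmean \<psi> = 0"
  shows "set_integrable lborel I (\<lambda>z. p z * \<psi> z * primitive f z)"
    and "set_integrable lborel I (\<lambda>t. f t * cumul \<psi> t)"
    and "(LINT z:I|lborel. p z * \<psi> z * primitive f z) = - (LINT t:I|lborel. f t * cumul \<psi> t)"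
proof -
  have kernel: "(\<lambda>t. f t * (LINT z:I|lborel. p z * \<psi> z * primitive_kernel c z t)) = (\<lambda>t. - (f t * cumul \<psi> t))"
    using integral_p_mult_primitive_kernel[OF assms(2,3)] by simp
  note swap = integral_p_mult_primitive_swap[OF int, unfolded kernel]
  show "set_integrable lborel I (\<lambda>z. p z * \<psi> z * primitive f z)"
    by (rule swap(1))
  show "set_integrable lborel I (\<lambda>t. f t * cumul \<psi> t)"
    using swap(2) unfolding set_integrable_def by simp
  show "(LINT z:I|lborel. p z * \<psi> z * primitive f z) = - (LINT t:I|lborel. f t * cumul \<psi> t)"
    using swap(3) unfolding set_lebesgue_integral_def by simp
qed

lemma integrable_fubini_integrand_L1:
  assumes "set_integrable lborel I f" "set_integrable lborel I (\<lambda>z. p z * \<psi> z)"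
    and [measurable]: "f \<in> borel_measurable borel" "\<psi> \<in> borel_measurable borel"
  shows "integrable (lborel \<Otimes>\<^sub>M lborel) (fubini_integrand f \<psi>)"
proof (rule integrable_pair_lborel_product_bound)
  show "integrable lborel (\<lambda>t. indicator I t * \<bar>f t\<bar>)"
    using set_integrable_abs[OF assms(1)] unfolding set_integrable_def by simp
  show "integrable lborel (\<lambda>z. indicator I z * \<bar>p z * \<psi> z\<bar>)"
    using set_integrable_abs[OF assms(2)] unfolding set_integrable_def by simp
  fix t z
  have "\<bar>fubini_integrand f \<psi> (t, z)\<bar>
      = indicator I t * \<bar>f t\<bar> * (indicator I z * \<bar>p z * \<psi> z\<bar>) * \<bar>primitive_kernel c z t\<bar>"
    by (simp add: fubini_integrand_def abs_mult)
  also have "\<dots> \<le> indicator I t * \<bar>f t\<bar> * (indicator I z * \<bar>p z * \<psi> z\<bar>) * 1"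
    by (intro mult_left_mono abs_primitive_kernel_le) auto
  finally show "\<bar>fubini_integrand f \<psi> (t, z)\<bar> \<le> indicator I t * \<bar>f t\<bar> * (indicator I z * \<bar>p z * \<psi> z\<bar>)"
    by simp
qed auto

text \<open>The boundedness of \<open>f\<close> only serves to make \<open>primitive f\<close> bounded, hence in \<open>H\<^sup>1(p, w)\<close>,
  so that the Poincare inequality applies to it.\<close>

lemma pairing_cumul_bound_bounded:
  assumes f_int: "set_integrable lborel I f" and f_L2: "f \<in> L2w I q" and bound: "\<And>x. \<bar>f x\<bar> \<le> B"
    and \<psi>: "\<psi> \<in> L2w I p" "pmean \<psi> = 0"
  shows "(LINT x:I|lborel. f x * cumul \<psi> x)\<^sup>2 \<le> C * nrm2 I p \<psi> * nrm2 I q f"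
proof -
  note [measurable] = L2wD(1)[OF f_L2] L2wD(1)[OF \<psi>(1)]
  have prim_L2: "primitive f \<in> L2w I p"
    using abs_primitive_le[OF I_borel f_int] by (intro bounded_in_L2w) auto
  have "H1 I p w (primitive f) f"
    unfolding H1_def q_eq
    using prim_L2 f_L2 weak_deriv_primitive[OF _ loc_integrable_bounded[OF _ bound]] by simp
  then have var: "var_p I p (primitive f) \<le> C * nrm2 I q f"
    using poincare unfolding q_eq by blast
  have \<psi>_int: "set_integrable lborel I (\<lambda>z. p z * \<psi> z)"
    using \<psi>(1) by (rule L2w_p_integrable)
  note swap = integral_p_mult_primitive[OF integrable_fubini_integrand_L1[OF f_int \<psi>_int] \<psi>_int \<psi>(2)]
  have "(LINT z:I|lborel. p z * \<psi> z * centered (primitive f) z)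
      = (LINT z:I|lborel. p z * \<psi> z * primitive f z - pmean (primitive f) * (p z * \<psi> z))"
    unfolding centered_def by (simp add: algebra_simps)
  also have "\<dots> = - (LINT x:I|lborel. f x * cumul \<psi> x)"
    using swap(1) \<psi>_int \<psi>(2) swap(3) by (simp add: pmean_def)
  finally have "(LINT x:I|lborel. f x * cumul \<psi> x)\<^sup>2
      = (LINT z:I|lborel. p z * \<psi> z * centered (primitive f) z)\<^sup>2"
    by (simp add: power2_eq_square)
  also have "\<dots> \<le> nrm2 I p \<psi> * nrm2 I p (centered (primitive f))"
    unfolding nrm2_def using L2wD(2)[OF \<psi>(1)] L2wD(2)[OF centered_L2w[OF prim_L2]] p_nonneg
    by (intro set_integral_Cauchy_Schwarz(2)) auto
  also have "\<dots> \<le> nrm2 I p \<psi> * (C * nrm2 I q f)"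
    using var nrm2_p_nonneg unfolding nrm2_centered[OF prim_L2] by (rule mult_left_mono)
  finally show ?thesis
    by (simp add: ac_simps)
qed

text \<open>On a set where \<open>q\<close> is bounded below, the truncation of \<open>cumul_over_q \<psi>\<close> is itself an
  admissible test function in the previous lemma, which yields \<open>s\<^sup>2 \<le> C \<parallel>\<psi>\<parallel>\<^sup>2 s\<close> for its
  squared norm \<open>s\<close>.\<close>

lemma truncated_cumul_over_q_bound:
  assumes \<psi>: "\<psi> \<in> L2w I p" "pmean \<psi> = 0"
    and [measurable]: "A \<in> sets borel" and "A \<subseteq> I" "bounded A"
    and q_ge: "\<And>x. x \<in> A \<Longrightarrow> \<epsilon> \<le> q x" and "0 < \<epsilon>"
  shows "set_integrable lborel A (\<lambda>x. q x * (cumul_over_q \<psi> x)\<^sup>2)"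
    and "(LINT x:A|lborel. q x * (cumul_over_q \<psi> x)\<^sup>2) \<le> C * nrm2 I p \<psi>"
proof -
  note [measurable] = L2wD(1)[OF \<psi>(1)]
  define L where "L = (LINT z:I|lborel. \<bar>p z * \<psi> z\<bar>)"
  have cumul_bound: "\<bar>cumul \<psi> x\<bar> \<le> L" for x
    unfolding L_def using L2w_p_integrable[OF \<psi>(1)] by (rule abs_cumul_le)
  then have "0 \<le> L"
    using abs_ge_zero order_trans by blast
  have ratio_bound: "\<bar>cumul_over_q \<psi> x\<bar> \<le> L / \<epsilon>" if "x \<in> A" for x
    unfolding cumul_over_q_def abs_divide
    using cumul_bound[of x] q_ge[OF that] \<open>0 < \<epsilon>\<close> \<open>0 \<le> L\<close> by (intro frac_le) auto
  have ratio_eq: "q x * (cumul_over_q \<psi> x)\<^sup>2 = cumul_over_q \<psi> x * cumul \<psi> x" if "x \<in> A" for x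
    using q_ge[OF that] \<open>0 < \<epsilon>\<close> by (simp add: cumul_over_q_def power2_eq_square)
  show g_int: "set_integrable lborel A (\<lambda>x. q x * (cumul_over_q \<psi> x)\<^sup>2)"
  proof (rule set_integrable_bounded_lborel)
    show "\<bar>q x * (cumul_over_q \<psi> x)\<^sup>2\<bar> \<le> L / \<epsilon> * L" if "x \<in> A" for x
      unfolding ratio_eq[OF that] abs_mult
      using ratio_bound[OF that] cumul_bound[of x] \<open>0 \<le> L\<close> by (intro mult_mono) auto
  qed (use \<open>bounded A\<close> in simp_all)
  define f where "f x = indicator A x * cumul_over_q \<psi> x" for x
  have [measurable]: "f \<in> borel_measurable borel"
    unfolding f_def by measurable
  have f_int: "set_integrable lborel I f"
  proof -
    have "set_integrable lborel A (cumul_over_q \<psi>)"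
      by (rule set_integrable_bounded_lborel[OF _ _ \<open>bounded A\<close> ratio_bound]) simp_all
    moreover have "indicator I x *\<^sub>R f x = indicator A x *\<^sub>R cumul_over_q \<psi> x" for x
      using \<open>A \<subseteq> I\<close> by (auto simp: f_def indicator_def)
    ultimately show ?thesis
      unfolding set_integrable_def by simp
  qed
  have f_bound: "\<bar>f x\<bar> \<le> L / \<epsilon>" for x
    using ratio_bound[of x] \<open>0 \<le> L\<close> \<open>0 < \<epsilon>\<close> by (simp add: f_def indicator_def)
  have f_sq: "indicator I x *\<^sub>R (q x * (f x)\<^sup>2) = indicator A x *\<^sub>R (q x * (cumul_over_q \<psi> x)\<^sup>2)" for x
    using \<open>A \<subseteq> I\<close> by (auto simp: f_def indicator_def)
  have "set_integrable lborel I (\<lambda>x. q x * (f x)\<^sup>2)"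
    using g_int[unfolded set_integrable_def] unfolding set_integrable_def f_sq .
  then have f_L2: "f \<in> L2w I q"
    unfolding L2w_def by simp
  have f_cumul: "indicator I x *\<^sub>R (f x * cumul \<psi> x) = indicator A x *\<^sub>R (q x * (cumul_over_q \<psi> x)\<^sup>2)" for x
    using \<open>A \<subseteq> I\<close> ratio_eq[of x] by (auto simp: f_def indicator_def)
  define s where "s = (LINT x:A|lborel. q x * (cumul_over_q \<psi> x)\<^sup>2)"
  have "s = nrm2 I q f" "s = (LINT x:I|lborel. f x * cumul \<psi> x)"
    unfolding s_def nrm2_def set_lebesgue_integral_def f_sq f_cumul by simp_all
  then have "s\<^sup>2 \<le> C * nrm2 I p \<psi> * s" "0 \<le> s"
    using pairing_cumul_bound_bounded[OF f_int f_L2 f_bound \<psi>] nrm2_q_nonneg by simp_all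
  moreover have "0 \<le> C * nrm2 I p \<psi>"
    using C_nonneg nrm2_p_nonneg by simp
  ultimately show "s \<le> C * nrm2 I p \<psi>"
    by (cases "s = 0") (auto simp: power2_eq_square mult_le_cancel_right)
qed

lemma cumul_over_q_L2w:
  assumes \<psi>: "\<psi> \<in> L2w I p" "pmean \<psi> = 0"
  shows "cumul_over_q \<psi> \<in> L2w I q" and "nrm2 I q (cumul_over_q \<psi>) \<le> C * nrm2 I p \<psi>"
proof -
  note [measurable] = L2wD(1)[OF \<psi>(1)]
  define A where "A n = {x\<in>I. 1 / real (Suc n) \<le> q x \<and> \<bar>x - c\<bar> \<le> real n}" for n
  have [measurable]: "A n \<in> sets borel" for n
    unfolding A_def by measurable
  have "A n \<subseteq> I" for n
    unfolding A_def by blast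
  have "bounded (A n)" for n
    by (rule bounded_subset[of "cball c (real n)"]) (auto simp: A_def dist_real_def)
  have "incseq A"
  proof (rule incseq_SucI)
    fix n
    have "1 / real (Suc (Suc n)) \<le> 1 / real (Suc n)"
      by (simp add: frac_le)
    then show "A n \<subseteq> A (Suc n)"
      unfolding A_def by auto
  qed
  have cover: "AE x in lborel. x \<in> I \<longrightarrow> (\<exists>n. x \<in> A n)"
    using q_pos
  proof eventually_elim
    case (elim x)
    show ?case
    proof
      assume "x \<in> I"
      then have "0 < q x"
        using elim by simp
      obtain n :: nat where n: "max (1 / q x) \<bar>x - c\<bar> \<le> real n"
        using real_arch_simple by blast
      then have "1 / real (Suc n) \<le> q x"
        using \<open>0 < q x\<close> by (simp add: field_simps)
      then show "\<exists>n. x \<in> A n"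
        using n \<open>x \<in> I\<close> unfolding A_def by auto
    qed
  qed
  have nonneg: "AE x in lborel. x \<in> I \<longrightarrow> 0 \<le> q x * (cumul_over_q \<psi> x)\<^sup>2"
    using q_pos by eventually_elim (simp add: less_imp_le)
  have "1 / real (Suc n) \<le> q x" if "x \<in> A n" for n x
    using that unfolding A_def by blast
  note truncated = truncated_cumul_over_q_bound[OF \<psi> _ \<open>A _ \<subseteq> I\<close> \<open>bounded (A _)\<close> this]
  have "set_integrable lborel I (\<lambda>x. q x * (cumul_over_q \<psi> x)\<^sup>2)"
    "(LINT x:I|lborel. q x * (cumul_over_q \<psi> x)\<^sup>2) \<le> C * nrm2 I p \<psi>"
    by (rule set_integrable_exhaustion[OF _ _ _ \<open>incseq A\<close> \<open>A _ \<subseteq> I\<close> cover nonneg truncated]; simp)+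
  then show "cumul_over_q \<psi> \<in> L2w I q" "nrm2 I q (cumul_over_q \<psi>) \<le> C * nrm2 I p \<psi>"
    unfolding L2w_def nrm2_def by simp_all
qed

lemma pairing_cumul_bound:
  assumes f: "f \<in> L2w I q" and \<psi>: "\<psi> \<in> L2w I p" "pmean \<psi> = 0"
  shows "set_integrable lborel I (\<lambda>t. f t * cumul \<psi> t)"
    and "(LINT t:I|lborel. f t * cumul \<psi> t)\<^sup>2 \<le> nrm2 I q f * (C * nrm2 I p \<psi>)"
proof -
  note [measurable] = L2wD(1)[OF f] L2wD(1)[OF \<psi>(1)]
  note ratio = cumul_over_q_L2w[OF \<psi>]
  have q_nonneg: "AE x in lborel. x \<in> I \<longrightarrow> 0 \<le> q x"
    using q_pos by eventually_elim (simp add: less_imp_le)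
  have CS: "set_integrable lborel I (\<lambda>x. q x * f x * cumul_over_q \<psi> x)"
    "(LINT x:I|lborel. q x * f x * cumul_over_q \<psi> x)\<^sup>2
      \<le> (LINT x:I|lborel. q x * (f x)\<^sup>2) * (LINT x:I|lborel. q x * (cumul_over_q \<psi> x)\<^sup>2)"
    using q_nonneg L2wD(2)[OF f] L2wD(2)[OF ratio(1)] by (intro set_integral_Cauchy_Schwarz; simp)+
  have eq: "AE x in lborel. x \<in> I \<longrightarrow> q x * f x * cumul_over_q \<psi> x = f x * cumul \<psi> x"
    using q_pos by eventually_elim (auto simp: cumul_over_q_def)
  have "set_integrable lborel I (\<lambda>x. q x * f x * cumul_over_q \<psi> x)
      = set_integrable lborel I (\<lambda>t. f t * cumul \<psi> t)"
    by (rule set_integrable_cong_AE[OF _ _ eq]; measurable)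
  then show "set_integrable lborel I (\<lambda>t. f t * cumul \<psi> t)"
    using CS(1) by (rule iffD1)
  have "(LINT x:I|lborel. q x * f x * cumul_over_q \<psi> x) = (LINT t:I|lborel. f t * cumul \<psi> t)"
    by (rule set_lebesgue_integral_cong_AE[OF _ _ _ eq]; measurable)
  then have "(LINT t:I|lborel. f t * cumul \<psi> t)\<^sup>2 \<le> nrm2 I q f * nrm2 I q (cumul_over_q \<psi>)"
    using CS(2) unfolding nrm2_def by simp
  also have "\<dots> \<le> nrm2 I q f * (C * nrm2 I p \<psi>)"
    using ratio(2) nrm2_q_nonneg by (rule mult_left_mono)
  finally show "(LINT t:I|lborel. f t * cumul \<psi> t)\<^sup>2 \<le> nrm2 I q f * (C * nrm2 I p \<psi>)" .
qed

subsection \<open>The primitive as a map from \<open>L\<^sup>2(p w)\<close> to \<open>H\<^sup>1(p, w)\<close>\<close>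

lemma step_L2w: "(\<lambda>z. of_bool (z \<le> x)) \<in> L2w I p"
  by (rule bounded_in_L2w[of _ 1]) auto

lemma pmean_step: "pmean (\<lambda>z. of_bool (z \<le> x)) = cdf I p x"
  unfolding pmean_def cdf_def set_lebesgue_integral_def
  by (rule Bochner_Integration.integral_cong) (auto simp: indicator_def)

lemma cumul_centered:
  assumes "u \<in> L2w I p"
  shows "cumul (centered u) x = cumul u x - pmean u * cdf I p x"
proof -
  have "set_integrable lborel {z\<in>I. z \<le> x} (\<lambda>z. p z * u z)"
    using L2w_p_integrable[OF assms] by (rule set_integrable_subset) auto
  moreover have "set_integrable lborel {z\<in>I. z \<le> x} p"
    using p_integrable by (rule set_integrable_subset) auto
  ultimately show ?thesis
    unfolding cumul_def cdf_def centered_def by (simp add: right_diff_distrib)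
qed

lemma cumul_centered_step: "cumul (centered (\<lambda>z. of_bool (z \<le> x))) t = kern I p x t"
proof -
  have "cumul (\<lambda>z. of_bool (z \<le> x)) t = cdf I p (min x t)"
    unfolding cumul_def cdf_def set_lebesgue_integral_def
    by (rule Bochner_Integration.integral_cong) (auto simp: indicator_def)
  then show ?thesis
    unfolding cumul_centered[OF step_L2w] pmean_step kern_def
    by (cases "t \<le> x") (auto simp: min_def max_def algebra_simps)
qed

lemma kern_pairing_bound:
  assumes "f \<in> L2w I q"
  shows "set_integrable lborel I (\<lambda>t. \<bar>f t\<bar> * kern I p c t)"
    and "(LINT t:I|lborel. \<bar>f t\<bar> * kern I p c t)\<^sup>2
          \<le> nrm2 I q f * (C * nrm2 I p (centered (\<lambda>z. of_bool (z \<le> c))))"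
proof -
  have "(\<lambda>t. \<bar>f t\<bar>) \<in> L2w I q"
    using assms unfolding L2w_def by auto
  note bound = pairing_cumul_bound[OF this centered_L2w[OF step_L2w] pmean_centered[OF step_L2w], of c]
  show "set_integrable lborel I (\<lambda>t. \<bar>f t\<bar> * kern I p c t)"
    using bound(1) unfolding cumul_centered_step .
  show "(LINT t:I|lborel. \<bar>f t\<bar> * kern I p c t)\<^sup>2
      \<le> nrm2 I q f * (C * nrm2 I p (centered (\<lambda>z. of_bool (z \<le> c))))"
    using bound(2) unfolding cumul_centered_step nrm2_def by simp
qed

definition kappa :: real where
  "kappa = min (cdf I p c) (1 - cdf I p c)"

lemma kappa_pos: "0 < kappa"
  using cdf_strict_bounds[OF c_in_I] unfolding kappa_def by simp

lemma integral_p_abs_primitive_kernel: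
  shows "set_integrable lborel I (\<lambda>z. p z * \<bar>primitive_kernel c z t\<bar>)"
    and "(LINT z:I|lborel. p z * \<bar>primitive_kernel c z t\<bar>) \<le> kern I p c t / kappa"
proof -
  show "set_integrable lborel I (\<lambda>z. p z * \<bar>primitive_kernel c z t\<bar>)"
    using L2w_p_integrable[OF bounded_in_L2w[of _ 1]] by (simp add: abs_primitive_kernel_le)
  have "(LINT z:I|lborel. p z * \<bar>primitive_kernel c z t\<bar>) * kappa \<le> kern I p c t"
  proof (cases "c \<le> t")
    case True
    have "(LINT z:I|lborel. p z * \<bar>primitive_kernel c z t\<bar>) = (LINT z:{z\<in>I. t < z}|lborel. p z)"
      unfolding set_lebesgue_integral_def
      by (rule Bochner_Integration.integral_cong) (use True in \<open>auto simp: indicator_def primitive_kernel_def\<close>)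
    moreover have "(1 - cdf I p t) * kappa \<le> (1 - cdf I p t) * cdf I p c"
      using cdf_le_1[of t] by (intro mult_left_mono) (auto simp: kappa_def)
    ultimately show ?thesis
      using True unfolding integral_p_greater kern_def by (simp add: min_def max_def mult.commute)
  next
    case False
    have "(LINT z:I|lborel. p z * \<bar>primitive_kernel c z t\<bar>) = cdf I p t"
      unfolding set_lebesgue_integral_def cdf_def
      by (rule Bochner_Integration.integral_cong) (use False in \<open>auto simp: indicator_def primitive_kernel_def\<close>)
    moreover have "cdf I p t * kappa \<le> cdf I p t * (1 - cdf I p c)"
      using cdf_nonneg[of t] by (intro mult_left_mono) (auto simp: kappa_def)
    ultimately show ?thesis
      using False unfolding kern_def by (simp add: min_def max_def)
  qed
  then show "(LINT z:I|lborel. p z * \<bar>primitive_kernel c z t\<bar>) \<le> kern I p c t / kappa"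
    using kappa_pos by (simp add: field_simps)
qed


lemma integral_abs_fubini_integrand_le:
  assumes [measurable]: "f \<in> borel_measurable borel" "\<psi> \<in> borel_measurable borel"
    and bound: "\<And>z. z \<in> I \<Longrightarrow> \<bar>\<psi> z\<bar> \<le> N"
  shows "integrable lborel (\<lambda>z. fubini_integrand f \<psi> (t, z))"
    and "(LBINT z. \<bar>fubini_integrand f \<psi> (t, z)\<bar>) \<le> N / kappa * (indicator I t * (\<bar>f t\<bar> * kern I p c t))"
proof -
  have "0 \<le> N"
    using bound[OF c_in_I] by linarith
  define G where "G z = (\<bar>f t\<bar> * N) * (indicator I z *\<^sub>R (p z * \<bar>primitive_kernel c z t\<bar>))" for z
  have G_int: "integrable lborel G"
    unfolding G_def using integral_p_abs_primitive_kernel(1)[of t] unfolding set_integrable_def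
    by (rule integrable_mult_right)
  have G_nonneg: "0 \<le> G z" for z
    using \<open>0 \<le> N\<close> p_nonneg[of z] by (cases "z \<in> I") (simp_all add: G_def)
  have F_le_G: "\<bar>fubini_integrand f \<psi> (t, z)\<bar> \<le> G z" for z
  proof (cases "t \<in> I \<and> z \<in> I")
    case True
    then have "\<bar>\<psi> z\<bar> * (p z * \<bar>primitive_kernel c z t\<bar>) \<le> N * (p z * \<bar>primitive_kernel c z t\<bar>)"
      using bound p_nonneg by (intro mult_right_mono) auto
    then have "\<bar>f t\<bar> * (\<bar>\<psi> z\<bar> * (p z * \<bar>primitive_kernel c z t\<bar>))
        \<le> \<bar>f t\<bar> * (N * (p z * \<bar>primitive_kernel c z t\<bar>))"
      by (rule mult_left_mono) simp
    moreover have "\<bar>fubini_integrand f \<psi> (t, z)\<bar> = \<bar>f t\<bar> * (\<bar>\<psi> z\<bar> * (p z * \<bar>primitive_kernel c z t\<bar>))"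
      using True p_nonneg[of z] by (simp add: fubini_integrand_def abs_mult)
    moreover have "G z = \<bar>f t\<bar> * (N * (p z * \<bar>primitive_kernel c z t\<bar>))"
      using True by (simp add: G_def)
    ultimately show ?thesis
      by simp
  qed (use G_nonneg in \<open>auto simp: fubini_integrand_def\<close>)
  show "integrable lborel (\<lambda>z. fubini_integrand f \<psi> (t, z))"
  proof (rule Bochner_Integration.integrable_bound[OF G_int])
    show "AE z in lborel. norm (fubini_integrand f \<psi> (t, z)) \<le> norm (G z)"
      using F_le_G G_nonneg by (intro AE_I2) simp
  qed simp
  show "(LBINT z. \<bar>fubini_integrand f \<psi> (t, z)\<bar>) \<le> N / kappa * (indicator I t * (\<bar>f t\<bar> * kern I p c t))"
  proof (cases "t \<in> I")
    case True
    have "(LBINT z. \<bar>fubini_integrand f \<psi> (t, z)\<bar>) \<le> (LBINT z. G z)"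
      using F_le_G G_int G_nonneg by (intro integral_mono') auto
    also have "\<dots> = \<bar>f t\<bar> * N * (LINT z:I|lborel. p z * \<bar>primitive_kernel c z t\<bar>)"
      unfolding G_def set_lebesgue_integral_def by (rule integral_mult_right_zero)
    also have "\<dots> \<le> \<bar>f t\<bar> * N * (kern I p c t / kappa)"
      using \<open>0 \<le> N\<close> by (intro mult_left_mono integral_p_abs_primitive_kernel(2)) auto
    finally show ?thesis
      using True by (simp add: ac_simps)
  qed (simp add: fubini_integrand_def)
qed

lemma integrable_fubini_integrand_bounded:
  assumes f: "f \<in> L2w I q" and \<psi>_borel [measurable]: "\<psi> \<in> borel_measurable borel"
    and bound: "\<And>z. z \<in> I \<Longrightarrow> \<bar>\<psi> z\<bar> \<le> N"
  shows "integrable (lborel \<Otimes>\<^sub>M lborel) (fubini_integrand f \<psi>)"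
proof (rule lborel_pair.Fubini_integrable)
  note [measurable] = L2wD(1)[OF f]
  note fiber = integral_abs_fubini_integrand_le[OF L2wD(1)[OF f] \<psi>_borel bound]
  show "fubini_integrand f \<psi> \<in> borel_measurable (lborel \<Otimes>\<^sub>M lborel)"
    by simp
  show "AE t in lborel. integrable lborel (\<lambda>z. fubini_integrand f \<psi> (t, z))"
    using fiber(1) by simp
  show "integrable lborel (\<lambda>t. LBINT z. norm (fubini_integrand f \<psi> (t, z)))"
  proof (rule Bochner_Integration.integrable_bound)
    show "integrable lborel (\<lambda>t. N / kappa * (indicator I t * (\<bar>f t\<bar> * kern I p c t)))"
      using kern_pairing_bound(1)[OF f] unfolding set_integrable_def by simp
    have "norm (LBINT z. norm (fubini_integrand f \<psi> (t, z)))
        = (LBINT z. \<bar>fubini_integrand f \<psi> (t, z)\<bar>)" for t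
      by (simp add: integral_nonneg_AE)
    then show "AE t in lborel. norm (LBINT z. norm (fubini_integrand f \<psi> (t, z)))
        \<le> norm (N / kappa * (indicator I t * (\<bar>f t\<bar> * kern I p c t)))"
      using fiber(2) by (intro AE_I2) (metis abs_ge_self order_trans real_norm_def)
  qed measurable
qed

lemma abs_integral_p_mult_primitive_kernel_le:
  assumes bound: "\<And>z. \<bar>\<psi> z\<bar> \<le> 1"
  shows "\<bar>LINT z:I|lborel. p z * \<psi> z * primitive_kernel c z t\<bar> \<le> kern I p c t / kappa"
proof -
  have "\<bar>LINT z:I|lborel. p z * \<psi> z * primitive_kernel c z t\<bar>
      \<le> (LINT z:I|lborel. p z * \<bar>primitive_kernel c z t\<bar>)"
    unfolding set_lebesgue_integral_def
  proof (rule abs_integral_le_integral)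
    show "integrable lborel (\<lambda>z. indicator I z *\<^sub>R (p z * \<bar>primitive_kernel c z t\<bar>))"
      using integral_p_abs_primitive_kernel(1) unfolding set_integrable_def .
    show "\<bar>indicator I z *\<^sub>R (p z * \<psi> z * primitive_kernel c z t)\<bar>
        \<le> indicator I z *\<^sub>R (p z * \<bar>primitive_kernel c z t\<bar>)" for z
    proof (cases "z \<in> I")
      case True
      have "p z * \<bar>\<psi> z\<bar> * \<bar>primitive_kernel c z t\<bar> \<le> p z * 1 * \<bar>primitive_kernel c z t\<bar>"
        using bound[of z] p_nonneg[OF True] by (intro mult_right_mono mult_left_mono) auto
      then show ?thesis
        using True p_nonneg[OF True] by (simp add: abs_mult)
    qed simp
  qed
  also have "\<dots> \<le> kern I p c t / kappa"
    by (rule integral_p_abs_primitive_kernel(2))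
  finally show ?thesis .
qed

lemma primitive_p_integrable:
  assumes f: "f \<in> L2w I q"
  shows "set_integrable lborel I (\<lambda>z. p z * primitive f z)"
    and "(LINT z:I|lborel. \<bar>p z * primitive f z\<bar>) \<le> (LINT t:I|lborel. \<bar>f t\<bar> * kern I p c t) / kappa"
proof -
  note [measurable] = L2wD(1)[OF f]
  show "set_integrable lborel I (\<lambda>z. p z * primitive f z)"
    using integral_p_mult_primitive_swap(1)[OF integrable_fubini_integrand_bounded[OF f, of "\<lambda>_. 1" 1]]
    by simp
  define \<psi> where "\<psi> z = sgn (primitive f z)" for z
  have \<psi>_borel [measurable]: "\<psi> \<in> borel_measurable borel"
    unfolding \<psi>_def by measurable
  have \<psi>_bound: "\<bar>\<psi> z\<bar> \<le> 1" for z
    by (simp add: \<psi>_def abs_sgn_eq)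
  define K where "K t = (LINT z:I|lborel. p z * \<psi> z * primitive_kernel c z t)" for t
  note swap = integral_p_mult_primitive_swap[OF integrable_fubini_integrand_bounded[OF f \<psi>_borel \<psi>_bound]]
  have "\<bar>p z * primitive f z\<bar> = p z * \<psi> z * primitive f z" if "z \<in> I" for z
  proof -
    have "\<bar>primitive f z\<bar> = \<psi> z * primitive f z"
      unfolding \<psi>_def by (simp add: sgn_if)
    then show ?thesis
      using p_nonneg[OF that] by (simp add: abs_mult)
  qed
  then have "(LINT z:I|lborel. \<bar>p z * primitive f z\<bar>) = (LINT z:I|lborel. p z * \<psi> z * primitive f z)"
    by (intro set_lebesgue_integral_cong) auto
  also have "\<dots> = (LINT t:I|lborel. f t * K t)"
    unfolding K_def by (rule swap(3))
  also have "\<dots> \<le> (LINT t:I|lborel. \<bar>f t\<bar> * kern I p c t / kappa)"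
  proof (rule set_integral_mono)
    show "set_integrable lborel I (\<lambda>t. \<bar>f t\<bar> * kern I p c t / kappa)"
      using kern_pairing_bound(1)[OF f] by simp
    show "f t * K t \<le> \<bar>f t\<bar> * kern I p c t / kappa" for t
      using mult_left_mono[OF abs_integral_p_mult_primitive_kernel_le[of \<psi> t, OF \<psi>_bound] abs_ge_zero[of "f t"]]
        abs_ge_self[of "f t * K t"]
      unfolding K_def by (simp add: abs_mult)
  qed (unfold K_def, rule swap(2))
  finally show "(LINT z:I|lborel. \<bar>p z * primitive f z\<bar>) \<le> (LINT t:I|lborel. \<bar>f t\<bar> * kern I p c t) / kappa"
    by simp
qed

lemma nrm2_eq_pairing_primitive:
  assumes f: "f \<in> L2w I q" and u_borel [measurable]: "u \<in> borel_measurable borel"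
    and u_bound: "\<And>x. \<bar>u x\<bar> \<le> N" and u_sq: "\<And>x. x \<in> I \<Longrightarrow> u x * primitive f x = (u x)\<^sup>2"
  shows "nrm2 I p u = pmean u * pmean (primitive f) - (LINT t:I|lborel. f t * cumul (centered u) t)"
proof -
  note [measurable] = L2wD(1)[OF f]
  have u_L2: "u \<in> L2w I p"
    using u_borel u_bound by (rule bounded_in_L2w)
  have "\<bar>centered u x\<bar> \<le> N + \<bar>pmean u\<bar>" for x
    using u_bound[of x] by (simp add: centered_def)
  note swap = integral_p_mult_primitive[OF integrable_fubini_integrand_bounded[OF f centered_borel[OF u_borel] this]
      L2w_p_integrable[OF centered_L2w[OF u_L2]] pmean_centered[OF u_L2]]
  have "nrm2 I p u = (LINT x:I|lborel. p x * centered u x * primitive f x + pmean u * (p x * primitive f x))"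
    unfolding nrm2_def by (rule set_lebesgue_integral_cong) (auto simp: centered_def u_sq[symmetric] algebra_simps)
  also have "\<dots> = pmean u * pmean (primitive f) - (LINT t:I|lborel. f t * cumul (centered u) t)"
    using swap(1,3) primitive_p_integrable(1)[OF f] unfolding pmean_def by simp
  finally show ?thesis .
qed

lemma truncated_primitive_bound:
  assumes f: "f \<in> L2w I q" and [measurable]: "A \<in> sets borel" and "A \<subseteq> I"
    and bound: "\<And>x. x \<in> A \<Longrightarrow> \<bar>primitive f x\<bar> \<le> N"
  shows "set_integrable lborel A (\<lambda>x. p x * (primitive f x)\<^sup>2)"
    and "(LINT x:A|lborel. p x * (primitive f x)\<^sup>2)
          \<le> C * nrm2 I q f + 2 * (LINT z:I|lborel. \<bar>p z * primitive f z\<bar>)\<^sup>2"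
proof -
  note [measurable] = L2wD(1)[OF f]
  define \<Phi> where "\<Phi> = primitive f"
  define E where "E = (LINT z:I|lborel. \<bar>p z * \<Phi> z\<bar>)"
  define u where "u x = indicator A x * \<Phi> x" for x
  have u_borel [measurable]: "u \<in> borel_measurable borel"
    unfolding u_def \<Phi>_def by measurable
  have u_bound: "\<bar>u x\<bar> \<le> \<bar>N\<bar>" for x
    using bound[of x] by (auto simp: u_def \<Phi>_def indicator_def)
  have u_L2: "u \<in> L2w I p"
    using u_borel u_bound by (rule bounded_in_L2w)
  have u_sq: "indicator I x *\<^sub>R (p x * (u x)\<^sup>2) = indicator A x *\<^sub>R (p x * (\<Phi> x)\<^sup>2)" for x
    using \<open>A \<subseteq> I\<close> by (auto simp: u_def indicator_def)
  show "set_integrable lborel A (\<lambda>x. p x * (primitive f x)\<^sup>2)"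
    using L2wD(2)[OF u_L2] unfolding set_integrable_def u_sq \<Phi>_def .
  define X where "X = (LINT x:A|lborel. p x * (\<Phi> x)\<^sup>2)"
  have X_eq: "X = nrm2 I p u"
    unfolding X_def nrm2_def set_lebesgue_integral_def u_sq ..
  have \<Phi>_int: "set_integrable lborel I (\<lambda>z. p z * \<Phi> z)"
    unfolding \<Phi>_def using f by (rule primitive_p_integrable(1))
  have mean_bound: "\<bar>pmean u\<bar> \<le> E" "\<bar>pmean \<Phi>\<bar> \<le> E"
    unfolding pmean_def E_def set_lebesgue_integral_def
    using set_integrable_abs[OF \<Phi>_int] unfolding set_integrable_def
    by (auto intro!: abs_integral_le_integral simp: u_def indicator_def abs_mult)
  define Y where "Y = (LINT t:I|lborel. f t * cumul (centered u) t)"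
  have "X = pmean u * pmean \<Phi> - Y"
    unfolding X_eq Y_def \<Phi>_def using f u_borel u_bound
    by (rule nrm2_eq_pairing_primitive) (simp add: u_def \<Phi>_def power2_eq_square indicator_def)
  also have "\<dots> \<le> \<bar>Y\<bar> + E\<^sup>2"
  proof -
    have "\<bar>pmean u\<bar> * \<bar>pmean \<Phi>\<bar> \<le> E * E"
      using mean_bound by (intro mult_mono) auto
    then show ?thesis
      using abs_ge_minus_self[of Y] abs_ge_self[of "pmean u * pmean \<Phi>"]
      unfolding abs_mult power2_eq_square by linarith
  qed
  finally have "X \<le> \<bar>Y\<bar> + E\<^sup>2" .
  moreover have "Y\<^sup>2 \<le> nrm2 I q f * (C * nrm2 I p (centered u))"
    unfolding Y_def using f centered_L2w[OF u_L2] pmean_centered[OF u_L2] by (rule pairing_cumul_bound(2))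
  then have "\<bar>Y\<bar>\<^sup>2 \<le> C * nrm2 I q f * X"
    using mult_left_mono[OF mult_left_mono[OF nrm2_centered_le[OF u_L2] C_nonneg] nrm2_q_nonneg[of f]]
    unfolding X_eq by (simp add: ac_simps)
  ultimately show "X \<le> C * nrm2 I q f + 2 * E\<^sup>2"
    by (rule le_of_sq_le_mult) (use C_nonneg nrm2_q_nonneg in auto)
qed

lemma primitive_L2w:
  assumes f: "f \<in> L2w I q"
  shows "primitive f \<in> L2w I p"
    and "nrm2 I p (primitive f) \<le> C * nrm2 I q f + 2 * (LINT z:I|lborel. \<bar>p z * primitive f z\<bar>)\<^sup>2"
proof -
  note [measurable] = L2wD(1)[OF f]
  define A where "A n = {x\<in>I. \<bar>primitive f x\<bar> \<le> real n}" for n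
  have [measurable]: "A n \<in> sets borel" for n
    unfolding A_def by measurable
  have "incseq A"
    unfolding A_def by (intro monoI) auto
  have cover: "AE x in lborel. x \<in> I \<longrightarrow> (\<exists>n. x \<in> A n)"
    unfolding A_def by (intro AE_I2) (auto intro: real_arch_simple)
  have nonneg: "AE x in lborel. x \<in> I \<longrightarrow> 0 \<le> p x * (primitive f x)\<^sup>2"
    using p_nonneg by (intro AE_I2) simp
  have "A n \<subseteq> I" "\<And>x. x \<in> A n \<Longrightarrow> \<bar>primitive f x\<bar> \<le> real n" for n
    unfolding A_def by auto
  note truncated = truncated_primitive_bound[OF f _ this]
  have "set_integrable lborel I (\<lambda>x. p x * (primitive f x)\<^sup>2)"
    "(LINT x:I|lborel. p x * (primitive f x)\<^sup>2)
      \<le> C * nrm2 I q f + 2 * (LINT z:I|lborel. \<bar>p z * primitive f z\<bar>)\<^sup>2"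
    by (rule set_integrable_exhaustion[OF _ _ _ \<open>incseq A\<close> \<open>A _ \<subseteq> I\<close> cover nonneg truncated]; simp)+
  then show "primitive f \<in> L2w I p"
    "nrm2 I p (primitive f) \<le> C * nrm2 I q f + 2 * (LINT z:I|lborel. \<bar>p z * primitive f z\<bar>)\<^sup>2"
    unfolding L2w_def nrm2_def by simp_all
qed

subsection \<open>Compactness of the kernel operator\<close>

lemma cumul_diff:
  assumes "set_integrable lborel I (\<lambda>z. p z * u z)" "set_integrable lborel I (\<lambda>z. p z * v z)"
  shows "cumul (\<lambda>z. u z - v z) x = cumul u x - cumul v x"
proof -
  have "set_integrable lborel {z\<in>I. z \<le> x} (\<lambda>z. p z * u z)" "set_integrable lborel {z\<in>I. z \<le> x} (\<lambda>z. p z * v z)"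
    using assms by (auto intro: set_integrable_subset)
  then show ?thesis
    unfolding cumul_def by (simp add: right_diff_distrib)
qed

lemma cumul_over_q_centered_diff:
  assumes "u \<in> L2w I p" "v \<in> L2w I p"
  shows "cumul_over_q (centered u) x - cumul_over_q (centered v) x
          = cumul_over_q (centered (\<lambda>z. u z - v z)) x"
proof -
  have "centered (\<lambda>z. u z - v z) = (\<lambda>z. centered u z - centered v z)"
    using pmean_diff[OF L2w_p_integrable[OF assms(1)] L2w_p_integrable[OF assms(2)]]
    by (simp add: centered_def fun_eq_iff)
  then show ?thesis
    using cumul_diff[OF L2w_p_integrable[OF centered_L2w[OF assms(1)]] L2w_p_integrable[OF centered_L2w[OF assms(2)]]]
    by (simp add: cumul_over_q_def diff_divide_distrib)
qed

lemma integral_kern_mult: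
  assumes f: "f \<in> L2w I q"
  shows "(LINT y:I|lborel. kern I p x y * f y) = - cumul (centered (primitive f)) x"
proof -
  note [measurable] = L2wD(1)[OF f]
  define \<psi> where "\<psi> = centered (\<lambda>z. of_bool (z \<le> x))"
  have \<psi>_borel: "\<psi> \<in> borel_measurable borel"
    unfolding \<psi>_def by measurable
  have \<psi>_bound: "\<bar>\<psi> z\<bar> \<le> 1" for z
    using cdf_nonneg[of x] cdf_le_1[of x] by (simp add: \<psi>_def centered_def pmean_step)
  have \<psi>_L2: "\<psi> \<in> L2w I p" and \<psi>_mean: "pmean \<psi> = 0"
    unfolding \<psi>_def using step_L2w by (rule centered_L2w, rule pmean_centered)
  note swap = integral_p_mult_primitive[OF integrable_fubini_integrand_bounded[OF f \<psi>_borel \<psi>_bound]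
      L2w_p_integrable[OF \<psi>_L2] \<psi>_mean]
  have \<Phi>_int: "set_integrable lborel I (\<lambda>z. p z * primitive f z)"
    using f by (rule primitive_p_integrable(1))
  have step_eq: "indicator I z *\<^sub>R (p z * of_bool (z \<le> x) * primitive f z)
      = indicator {z\<in>I. z \<le> x} z *\<^sub>R (p z * primitive f z)" for z
    by (simp add: indicator_def)
  have "set_integrable lborel {z\<in>I. z \<le> x} (\<lambda>z. p z * primitive f z)"
    using \<Phi>_int by (rule set_integrable_subset) auto
  then have step_int: "set_integrable lborel I (\<lambda>z. p z * of_bool (z \<le> x) * primitive f z)"
    unfolding set_integrable_def step_eq .
  have step_cumul: "(LINT z:I|lborel. p z * of_bool (z \<le> x) * primitive f z) = cumul (primitive f) x"
    unfolding cumul_def set_lebesgue_integral_def step_eq ..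
  have "(LINT z:I|lborel. p z * \<psi> z * primitive f z)
      = (LINT z:I|lborel. p z * of_bool (z \<le> x) * primitive f z - cdf I p x * (p z * primitive f z))"
    by (simp add: \<psi>_def centered_def pmean_step algebra_simps)
  also have "\<dots> = cumul (primitive f) x - cdf I p x * pmean (primitive f)"
    using step_int \<Phi>_int unfolding pmean_def step_cumul[symmetric] by simp
  finally show ?thesis
    using swap(3) unfolding cumul_centered[OF primitive_L2w(1)[OF f]] \<psi>_def cumul_centered_step
    by (simp add: mult.commute)
qed

lemma Ltilde_eq:
  assumes "f \<in> L2w I q"
  shows "Ltilde I p w f x = - cumul_over_q (centered (primitive f)) x"
  unfolding Ltilde_def cumul_over_q_def q_def integral_kern_mult[OF assms] by simp

lemma Ltilde_L2w:
  assumes "f \<in> L2w I q"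
  shows "Ltilde I p w f \<in> L2w I q"
proof -
  have "primitive f \<in> L2w I p"
    using assms by (rule primitive_L2w(1))
  then have "cumul_over_q (centered (primitive f)) \<in> L2w I q"
    by (intro cumul_over_q_L2w(1) centered_L2w pmean_centered)
  then show ?thesis
    unfolding Ltilde_eq[OF assms, abs_def] L2w_uminus_iff .
qed

lemma nrm2_primitive_le:
  assumes f: "f \<in> L2w I q"
  shows "nrm2 I p (primitive f)
          \<le> (C + 2 * C * nrm2 I p (centered (\<lambda>z. of_bool (z \<le> c))) / kappa\<^sup>2) * nrm2 I q f"
proof -
  define K0 where "K0 = C * nrm2 I p (centered (\<lambda>z. of_bool (z \<le> c)))"
  define E where "E = (LINT z:I|lborel. \<bar>p z * primitive f z\<bar>)"
  define X where "X = (LINT t:I|lborel. \<bar>f t\<bar> * kern I p c t)"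
  have "0 \<le> E"
    unfolding E_def by (rule set_integral_nonneg_AE) simp
  then have "E\<^sup>2 \<le> (X / kappa)\<^sup>2"
    using primitive_p_integrable(2)[OF f] unfolding E_def X_def by (intro power_mono)
  also have "\<dots> \<le> nrm2 I q f * K0 / kappa\<^sup>2"
    using kern_pairing_bound(2)[OF f] unfolding X_def K0_def power_divide
    by (intro divide_right_mono) auto
  finally have "C * nrm2 I q f + 2 * E\<^sup>2 \<le> C * nrm2 I q f + 2 * (nrm2 I q f * K0 / kappa\<^sup>2)"
    by simp
  then show ?thesis
    using primitive_L2w(2)[OF f] unfolding E_def K0_def by (simp add: algebra_simps)
qed

lemma nrm2_Ltilde_diff_le:
  assumes f: "f \<in> L2w I q" and g: "g \<in> L2w I p"
  shows "nrm2 I q (\<lambda>x. Ltilde I p w f x + cumul_over_q (centered g) x)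
          \<le> C * nrm2 I p (\<lambda>x. primitive f x - g x)"
proof -
  define D where "D = (\<lambda>x. primitive f x - g x)"
  have D_L2: "D \<in> L2w I p"
    unfolding D_def using primitive_L2w(1)[OF f] g by (rule L2w_diff)
  have "Ltilde I p w f x + cumul_over_q (centered g) x = - cumul_over_q (centered D) x" for x
    unfolding Ltilde_eq[OF f] D_def cumul_over_q_centered_diff[OF primitive_L2w(1)[OF f] g, symmetric]
    by simp
  then have "nrm2 I q (\<lambda>x. Ltilde I p w f x + cumul_over_q (centered g) x) = nrm2 I q (cumul_over_q (centered D))"
    unfolding nrm2_def by simp
  also have "\<dots> \<le> C * nrm2 I p (centered D)"
    using centered_L2w[OF D_L2] pmean_centered[OF D_L2] by (rule cumul_over_q_L2w(2))
  also have "\<dots> \<le> C * nrm2 I p D"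
    using nrm2_centered_le[OF D_L2] C_nonneg by (rule mult_left_mono)
  finally show ?thesis
    unfolding D_def .
qed

lemma Ltilde_compact:
  fixes fs :: "nat \<Rightarrow> real \<Rightarrow> real"
  assumes compact_embedding: "\<forall>(hs::nat \<Rightarrow> real \<Rightarrow> real) gs M. (\<forall>n. H1 I p w (hs n) (gs n) \<and>
        nrm2 I p (hs n) + nrm2 I q (gs n) \<le> M) \<longrightarrow>
      (\<exists>r g. strict_mono r \<and> g \<in> L2w I p \<and> (\<lambda>n. nrm2 I p (\<lambda>x. hs (r n) x - g x)) \<longlonglongrightarrow> 0)"
    and fs: "\<And>n. fs n \<in> L2w I q" "\<And>n. nrm2 I q (fs n) \<le> M"
  shows "\<exists>r g. strict_mono r \<and> g \<in> L2w I q \<and>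
           (\<lambda>n. nrm2 I q (\<lambda>x. Ltilde I p w (fs (r n)) x - g x)) \<longlonglongrightarrow> 0"
proof -
  define K where "K = C + 2 * C * nrm2 I p (centered (\<lambda>z. of_bool (z \<le> c))) / kappa\<^sup>2"
  have "0 \<le> K"
    unfolding K_def using C_nonneg nrm2_p_nonneg by simp
  have "H1 I p w (primitive (fs n)) (fs n)" for n
    unfolding H1_def q_eq
    using primitive_L2w(1)[OF fs(1)] weak_deriv_primitive[OF L2wD(1)] L2_loc_integrable fs(1)
    unfolding q_eq by blast
  moreover have "nrm2 I p (primitive (fs n)) + nrm2 I q (fs n) \<le> K * M + M" for n
    using nrm2_primitive_le[OF fs(1)[of n]] mult_left_mono[OF fs(2)[of n] \<open>0 \<le> K\<close>] fs(2)[of n]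
    unfolding K_def by linarith
  ultimately obtain r g0 where "strict_mono r" "g0 \<in> L2w I p"
    and conv: "(\<lambda>n. nrm2 I p (\<lambda>x. primitive (fs (r n)) x - g0 x)) \<longlonglongrightarrow> 0"
    using compact_embedding[rule_format, of "\<lambda>n. primitive (fs n)" fs "K * M + M"] by blast
  define g where "g x = - cumul_over_q (centered g0) x" for x
  have "g \<in> L2w I q"
    unfolding g_def L2w_uminus_iff using \<open>g0 \<in> L2w I p\<close>
    by (intro cumul_over_q_L2w(1) centered_L2w pmean_centered)
  have "(\<lambda>n. C * nrm2 I p (\<lambda>x. primitive (fs (r n)) x - g0 x)) \<longlonglongrightarrow> C * 0"
    using conv by (rule tendsto_mult_left)
  moreover have "eventually (\<lambda>n. 0 \<le> nrm2 I q (\<lambda>x. Ltilde I p w (fs (r n)) x - g x)) sequentially"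
    "eventually (\<lambda>n. nrm2 I q (\<lambda>x. Ltilde I p w (fs (r n)) x - g x)
       \<le> C * nrm2 I p (\<lambda>x. primitive (fs (r n)) x - g0 x)) sequentially"
    using nrm2_q_nonneg nrm2_Ltilde_diff_le[OF fs(1) \<open>g0 \<in> L2w I p\<close>]
    by (simp_all add: always_eventually g_def)
  ultimately have "(\<lambda>n. nrm2 I q (\<lambda>x. Ltilde I p w (fs (r n)) x - g x)) \<longlonglongrightarrow> 0"
    using tendsto_sandwich[OF _ _ tendsto_const] by simp
  then show ?thesis
    using \<open>strict_mono r\<close> \<open>g \<in> L2w I q\<close> by blast
qed

end

theorem proposition2p12:
  fixes a b :: ereal and p w :: "real \<Rightarrow> real"
  defines "I \<equiv> ival a b"
  assumes ab: "a < b"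
    and p_meas: "p \<in> borel_measurable lborel"
    and p_nonneg: "\<forall>x\<in>I. p x \<ge> 0"
    and p_int: "set_integrable lborel I p"
    and p_prob: "(LINT x:I|lborel. p x) = 1"
    and p_pos: "AE x in lborel. x \<in> I \<longrightarrow> p x > 0"
    and w_meas: "w \<in> borel_measurable lborel"
    and w_loc: "loc_integrable I w"
    and w_pos: "AE x in lborel. x \<in> I \<longrightarrow> w x > 0"
    and pw_loc: "loc_integrable I (\<lambda>x. p x * w x)"
    and H1: "poincare_const I p w < \<infinity>"
    and H2: "\<forall>f \<in> L2w I (\<lambda>x. p x * w x). loc_integrable I f"
    and dense: "\<forall>f \<in> L2w I p. \<forall>e>0. \<exists>h g. H1 I p w h g \<and> nrm2 I p (\<lambda>x. f x - h x) < e"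
    and compact_inj: "\<forall>(hs::nat \<Rightarrow> real \<Rightarrow> real) gs M. (\<forall>n. H1 I p w (hs n) (gs n) \<and>
                          nrm2 I p (hs n) + nrm2 I (\<lambda>x. p x * w x) (gs n) \<le> M) \<longrightarrow>
                       (\<exists>r f. strict_mono r \<and> f \<in> L2w I p \<and>
                          (\<lambda>n. nrm2 I p (\<lambda>x. hs (r n) x - f x)) \<longlonglongrightarrow> 0)"
  shows "(\<forall>f \<in> L2w I (\<lambda>x. p x * w x). Ltilde I p w f \<in> L2w I (\<lambda>x. p x * w x))
     \<and> (\<forall>(fs::nat \<Rightarrow> real \<Rightarrow> real) M. (\<forall>n. fs n \<in> L2w I (\<lambda>x. p x * w x) \<and> nrm2 I (\<lambda>x. p x * w x) (fs n) \<le> M) \<longrightarrow>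
          (\<exists>r g. strict_mono r \<and> g \<in> L2w I (\<lambda>x. p x * w x) \<and>
             (\<lambda>n. nrm2 I (\<lambda>x. p x * w x) (\<lambda>x. Ltilde I p w (fs (r n)) x - g x)) \<longlonglongrightarrow> 0))"
proof -
  obtain C where "0 \<le> C" and poincare: "\<forall>h g. H1 I p w h g \<longrightarrow> var_p I p h \<le> C * nrm2 I (\<lambda>x. p x * w x) g"
    using H1 unfolding poincare_const_def by (auto simp: Inf_eq_PInfty top_ereal_def)
  obtain c where "a < ereal c" "ereal c < b"
    using ereal_dense2[OF ab] by blast
  interpret poincare_interval I p w C c
  proof
    show "open I"
      unfolding I_def by (rule open_ival)
    show "\<And>x y z. x \<in> I \<Longrightarrow> y \<in> I \<Longrightarrow> x \<le> z \<Longrightarrow> z \<le> y \<Longrightarrow> z \<in> I"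
      unfolding I_def by (rule ival_convex)
    show "c \<in> I"
      unfolding I_def ival_def using \<open>a < ereal c\<close> \<open>ereal c < b\<close> by simp
  qed (use \<open>0 \<le> C\<close> poincare p_meas p_nonneg p_int p_prob p_pos w_meas w_pos H2 in auto)
  show ?thesis
    using Ltilde_L2w Ltilde_compact[OF compact_inj[unfolded q_eq]] unfolding q_eq by blast
qed

end
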